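(* Let $G$ be a connected chordal graph which is not an atom (i.e. has at least one clique separator). If $G$ is a path graph, then for each clique separator $Q$ of $G$ the $Q$-attachedness graph of $G$ has no full antipodal triangle and contains no subgraph isomorphic (as a 2-edge-colored graph) to any graph in $\mathcal F_0$.
   Context: Graphs are finite and simple. A graph is a path graph if there are a tree $T$ and a bijection from its vertices to a collection of paths of $T$ such that two vertices are adjacent iff the vertex sets of the corresponding paths intersect. Chordal: no induced cycle of length $\ge4$. A clique is an inclusion-maximal set of pairwise adjacent vertices. A clique $Q$ of $G$ is a clique separator if $G-Q$ has at least two connected components; if their vertex sets are $V_1,\dots,V_s$, put $\gamma_i=G[V_i\cup Q]$ and $\Gamma_Q=\{\gamma_1,\dots,\gamma_s\}$. A relevant clique of $\gamma\in\Gamma_Q$ is a clique $K$ of the graph $\gamma$ with $K\cap Q\neq\emptyset$ and $K\neq Q$. An element $\gamma$ is a neighboring subgraph of a vertex $v$ if $v$ belongs to some relevant clique of $\gamma$; a set $W\subseteq\Gamma_Q$ is neighboring if there is $v\in Q$ such that every member of $W$ is a neighboring subgraph of $v$. Relations on $\Gamma_Q$: attachedness $\gamma\bowtie\gamma'$ iff there are relevant cliques $K$ of $\gamma$ and $K'$ of $\gamma'$ with $K\cap K'\cap Q\neq\emptyset$; dominance $\gamma\le\gamma'$ iff $\gamma\bowtie\gamma'$ and, for each relevant clique $K'$ of $\gamma'$, either $K\cap Q\subseteq K'\cap Q$ for every relevant clique $K$ of $\gamma$, or $K\cap K'\cap Q=\emptyset$ for every relevant clique $K$ of $\gamma$; antipodality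 $\gamma\leftrightarrow\gamma'$ iff there are relevant cliques $K$ of $\gamma$ and $K'$ of $\gamma'$ with $K\cap K'\cap Q\neq\emptyset$ and $K\cap Q$, $K'\cap Q$ inclusion-wise incomparable. By standing convention, elements $\gamma,\gamma'$ with $\gamma\le\gamma'$ and $\gamma'\le\gamma$ are identified, so $\le$ is a partial order. The $Q$-attachedness graph has vertex set $\Gamma_Q$ and an edge $\gamma\gamma'$ for each pair of distinct attached elements, colored antipodal if $\gamma\leftrightarrow\gamma'$ and dominance otherwise. A triangle is full if its vertex set is a neighboring set; a full antipodal triangle is a full triangle with all edges antipodal. 2-edge-colored graphs: $W^{(0)}_{2k+1}$ ($k\ge1$): hub $c$, rim $x_1,\dots,x_{2k+1}$, rim edges $x_ix_{i+1}$ (indices mod $2k+1$) antipodal, all spokes $cx_i$ dominance. $W^{(1)}_{2k+1}$ ($k\ge1$): same, except the spoke $cx_1$ is antipodal. $F_{2n+1}$ ($n\ge2$): vertices $c,x_1,\dots,x_{2n}$, edges $x_ix_{i+1}$ ($1\le i\le 2n-1$), $cx_1$, $cx_{2n}$ antipodal and $cx_i$ ($2\le i\le 2n-1$) dominance. $\mathcal F_0=\{W^{(0)}_{2k+1},W^{(1)}_{2k+1},F_{2n+1}: k\ge1,n\ge2\}$. A subgraph isomorphic to $F$ means an injective map of $V(F)$ into the vertex set sending each edge of $F$ to an edge of the same color. *)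

theory Defs
  imports Main
begin

definition graph :: "'a set \<Rightarrow> ('a \<Rightarrow> 'a \<Rightarrow> bool) \<Rightarrow> bool" where
  "graph V E \<longleftrightarrow> finite V \<and> (\<forall>u v. E u v \<longrightarrow> E v u) \<and> (\<forall>v. \<not> E v v)
     \<and> (\<forall>u v. E u v \<longrightarrow> u \<in> V \<and> v \<in> V)"

definition reach :: "'a set \<Rightarrow> ('a \<Rightarrow> 'a \<Rightarrow> bool) \<Rightarrow> 'a \<Rightarrow> 'a \<Rightarrow> bool" where
  "reach S E = (\<lambda>a b. E a b \<and> a \<in> S \<and> b \<in> S)\<^sup>*\<^sup>*"

definition connected_graph :: "'a set \<Rightarrow> ('a \<Rightarrow> 'a \<Rightarrow> bool) \<Rightarrow> bool" where
  "connected_graph V E \<longleftrightarrow> (\<forall>u\<in>V. \<forall>v\<in>V. reach V E u v)"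

definition comps :: "'a set \<Rightarrow> ('a \<Rightarrow> 'a \<Rightarrow> bool) \<Rightarrow> 'a set set" where
  "comps S E = {{y \<in> S. reach S E x y} | x. x \<in> S}"

text \<open>Chordal: no induced cycle of length at least 4.\<close>
definition chordal :: "'a set \<Rightarrow> ('a \<Rightarrow> 'a \<Rightarrow> bool) \<Rightarrow> bool" where
  "chordal V E \<longleftrightarrow> \<not> (\<exists>xs. length xs \<ge> 4 \<and> distinct xs \<and> set xs \<subseteq> V \<and>
      (\<forall>i<length xs. \<forall>j<length xs. i \<noteq> j \<longrightarrow>
          (E (xs ! i) (xs ! j) \<longleftrightarrow> j = Suc i mod length xs \<or> i = Suc j mod length xs)))"

definition complete_set :: "'a set \<Rightarrow> ('a \<Rightarrow> 'a \<Rightarrow> bool) \<Rightarrow> 'a set \<Rightarrow> bool" where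
  "complete_set V E K \<longleftrightarrow> K \<subseteq> V \<and> (\<forall>u\<in>K. \<forall>v\<in>K. u \<noteq> v \<longrightarrow> E u v)"

definition clique :: "'a set \<Rightarrow> ('a \<Rightarrow> 'a \<Rightarrow> bool) \<Rightarrow> 'a set \<Rightarrow> bool" where
  "clique V E K \<longleftrightarrow> complete_set V E K \<and> (\<forall>K'. complete_set V E K' \<and> K \<subseteq> K' \<longrightarrow> K' = K)"

definition clique_separator :: "'a set \<Rightarrow> ('a \<Rightarrow> 'a \<Rightarrow> bool) \<Rightarrow> 'a set \<Rightarrow> bool" where
  "clique_separator V E Q \<longleftrightarrow> clique V E Q \<and> card (comps (V - Q) E) \<ge> 2"

definition is_cycle :: "'b set \<Rightarrow> ('b \<Rightarrow> 'b \<Rightarrow> bool) \<Rightarrow> 'b list \<Rightarrow> bool" where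
  "is_cycle V E xs \<longleftrightarrow> length xs \<ge> 3 \<and> distinct xs \<and> set xs \<subseteq> V \<and>
     successively E xs \<and> E (last xs) (hd xs)"

definition tree :: "'b set \<Rightarrow> ('b \<Rightarrow> 'b \<Rightarrow> bool) \<Rightarrow> bool" where
  "tree V E \<longleftrightarrow> graph V E \<and> V \<noteq> {} \<and> connected_graph V E \<and> \<not> (\<exists>xs. is_cycle V E xs)"

definition is_path_set :: "'b set \<Rightarrow> ('b \<Rightarrow> 'b \<Rightarrow> bool) \<Rightarrow> 'b set \<Rightarrow> bool" where
  "is_path_set V E P \<longleftrightarrow> (\<exists>xs. xs \<noteq> [] \<and> distinct xs \<and> set xs \<subseteq> V \<and> successively E xs \<and> P = set xs)"

text \<open>Path graph: intersection graph of paths of a tree (the tree's vertices are taken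
  from nat, which is no loss of generality for finite trees).\<close>
definition path_graph :: "'a set \<Rightarrow> ('a \<Rightarrow> 'a \<Rightarrow> bool) \<Rightarrow> bool" where
  "path_graph V E \<longleftrightarrow> (\<exists>(TV :: nat set) TE f. tree TV TE \<and> inj_on f V \<and>
      (\<forall>v\<in>V. is_path_set TV TE (f v)) \<and>
      (\<forall>u\<in>V. \<forall>v\<in>V. u \<noteq> v \<longrightarrow> (E u v \<longleftrightarrow> f u \<inter> f v \<noteq> {})))"

text \<open>Elements gamma_i = G[V_i \<union> Q] are induced subgraphs, represented by their vertex sets.\<close>
definition Gamma :: "'a set \<Rightarrow> ('a \<Rightarrow> 'a \<Rightarrow> bool) \<Rightarrow> 'a set \<Rightarrow> 'a set set" where
  "Gamma V E Q = {C \<union> Q | C. C \<in> comps (V - Q) E}"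

definition relevant :: "('a \<Rightarrow> 'a \<Rightarrow> bool) \<Rightarrow> 'a set \<Rightarrow> 'a set \<Rightarrow> 'a set \<Rightarrow> bool" where
  "relevant E Q g K \<longleftrightarrow> clique g E K \<and> K \<inter> Q \<noteq> {} \<and> K \<noteq> Q"

definition neighboring_sub :: "('a \<Rightarrow> 'a \<Rightarrow> bool) \<Rightarrow> 'a set \<Rightarrow> 'a set \<Rightarrow> 'a \<Rightarrow> bool" where
  "neighboring_sub E Q g v \<longleftrightarrow> (\<exists>K. relevant E Q g K \<and> v \<in> K)"

definition attached :: "('a \<Rightarrow> 'a \<Rightarrow> bool) \<Rightarrow> 'a set \<Rightarrow> 'a set \<Rightarrow> 'a set \<Rightarrow> bool" where
  "attached E Q g g' \<longleftrightarrow> (\<exists>K K'. relevant E Q g K \<and> relevant E Q g' K' \<and> K \<inter> K' \<inter> Q \<noteq> {})"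

definition dominated :: "('a \<Rightarrow> 'a \<Rightarrow> bool) \<Rightarrow> 'a set \<Rightarrow> 'a set \<Rightarrow> 'a set \<Rightarrow> bool" where
  "dominated E Q g g' \<longleftrightarrow> attached E Q g g' \<and>
     (\<forall>K'. relevant E Q g' K' \<longrightarrow>
        (\<forall>K. relevant E Q g K \<longrightarrow> K \<inter> Q \<subseteq> K' \<inter> Q) \<or>
        (\<forall>K. relevant E Q g K \<longrightarrow> K \<inter> K' \<inter> Q = {}))"

definition antipodal :: "('a \<Rightarrow> 'a \<Rightarrow> bool) \<Rightarrow> 'a set \<Rightarrow> 'a set \<Rightarrow> 'a set \<Rightarrow> bool" where
  "antipodal E Q g g' \<longleftrightarrow> (\<exists>K K'. relevant E Q g K \<and> relevant E Q g' K' \<and> K \<inter> K' \<inter> Q \<noteq> {}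
      \<and> \<not> (K \<inter> Q \<subseteq> K' \<inter> Q) \<and> \<not> (K' \<inter> Q \<subseteq> K \<inter> Q))"

text \<open>Elements with g \<le> g' and g' \<le> g are identified: we pass to the classes of the
  equivalence relation generated by mutual dominance.\<close>
definition identified :: "('a \<Rightarrow> 'a \<Rightarrow> bool) \<Rightarrow> 'a set \<Rightarrow> 'a set set \<Rightarrow> 'a set \<Rightarrow> 'a set \<Rightarrow> bool" where
  "identified E Q \<Gamma> = (\<lambda>g g'. g \<in> \<Gamma> \<and> g' \<in> \<Gamma> \<and> dominated E Q g g' \<and> dominated E Q g' g)\<^sup>*\<^sup>*"

definition att_vertices :: "'a set \<Rightarrow> ('a \<Rightarrow> 'a \<Rightarrow> bool) \<Rightarrow> 'a set \<Rightarrow> 'a set set set" where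
  "att_vertices V E Q = {{g' \<in> Gamma V E Q. identified E Q (Gamma V E Q) g g'} | g. g \<in> Gamma V E Q}"

datatype ecolor = Antipodal | Dominance

definition att_edge :: "'a set \<Rightarrow> ('a \<Rightarrow> 'a \<Rightarrow> bool) \<Rightarrow> 'a set \<Rightarrow> 'a set set \<Rightarrow> 'a set set \<Rightarrow> ecolor \<Rightarrow> bool" where
  "att_edge V E Q X Y c \<longleftrightarrow> X \<in> att_vertices V E Q \<and> Y \<in> att_vertices V E Q \<and> X \<noteq> Y \<and>
     (\<exists>g\<in>X. \<exists>g'\<in>Y. attached E Q g g') \<and>
     (c = Antipodal \<longleftrightarrow> (\<exists>g\<in>X. \<exists>g'\<in>Y. antipodal E Q g g'))"

definition neighboring_set :: "('a \<Rightarrow> 'a \<Rightarrow> bool) \<Rightarrow> 'a set \<Rightarrow> 'a set set set \<Rightarrow> bool" where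
  "neighboring_set E Q W \<longleftrightarrow> (\<exists>v\<in>Q. \<forall>X\<in>W. \<exists>g\<in>X. neighboring_sub E Q g v)"

definition has_full_antipodal_triangle :: "'a set \<Rightarrow> ('a \<Rightarrow> 'a \<Rightarrow> bool) \<Rightarrow> 'a set \<Rightarrow> bool" where
  "has_full_antipodal_triangle V E Q \<longleftrightarrow> (\<exists>X Y Z.
      att_edge V E Q X Y Antipodal \<and> att_edge V E Q Y Z Antipodal \<and> att_edge V E Q X Z Antipodal \<and>
      neighboring_set E Q {X, Y, Z})"

type_synonym cgraph = "nat set \<times> (nat \<times> nat \<times> ecolor) set"

text \<open>W^(0)_{2k+1}: hub 0, rim 1..2k+1.\<close>
definition W0 :: "nat \<Rightarrow> cgraph" where
  "W0 k = ({0..2*k+1},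
     {(i, i mod (2*k+1) + 1, Antipodal) | i. 1 \<le> i \<and> i \<le> 2*k+1} \<union>
     {(0, i, Dominance) | i. 1 \<le> i \<and> i \<le> 2*k+1})"

definition W1 :: "nat \<Rightarrow> cgraph" where
  "W1 k = ({0..2*k+1},
     {(i, i mod (2*k+1) + 1, Antipodal) | i. 1 \<le> i \<and> i \<le> 2*k+1} \<union>
     {(0, 1, Antipodal)} \<union>
     {(0, i, Dominance) | i. 2 \<le> i \<and> i \<le> 2*k+1})"

text \<open>F_{2n+1}: c = 0, x_1..x_{2n} = 1..2n.\<close>
definition Ffan :: "nat \<Rightarrow> cgraph" where
  "Ffan n = ({0..2*n},
     {(i, i+1, Antipodal) | i. 1 \<le> i \<and> i \<le> 2*n - 1} \<union>
     {(0, 1, Antipodal), (0, 2*n, Antipodal)} \<union>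
     {(0, i, Dominance) | i. 2 \<le> i \<and> i \<le> 2*n - 1})"

definition F0 :: "cgraph set" where
  "F0 = {W0 k | k. k \<ge> 1} \<union> {W1 k | k. k \<ge> 1} \<union> {Ffan n | n. n \<ge> 2}"

definition contains_colored_subgraph :: "'a set \<Rightarrow> ('a \<Rightarrow> 'a \<Rightarrow> bool) \<Rightarrow> 'a set \<Rightarrow> cgraph \<Rightarrow> bool" where
  "contains_colored_subgraph V E Q F \<longleftrightarrow> (\<exists>\<phi>. inj_on \<phi> (fst F) \<and> \<phi> ` fst F \<subseteq> att_vertices V E Q \<and>
      (\<forall>(u, v, c) \<in> snd F. att_edge V E Q (\<phi> u) (\<phi> v) c))"

end

theory Submission
  imports Defs
begin

text \<open>Fix a tree model of \<open>G\<close>, each vertex \<open>v\<close> being a path \<open>f v\<close> of a tree \<open>T\<close>. The paths of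
  the clique \<open>Q\<close> pairwise meet, so by the Helly property of subtrees of a tree they share a node
  \<open>t\<^sub>0\<close>; a vertex outside \<open>Q\<close> cannot use \<open>t\<^sub>0\<close>, since it would then be adjacent to all of \<open>Q\<close>.
  Hence every component of \<open>G - Q\<close> lives in a single branch of \<open>T - t\<^sub>0\<close>, while each path \<open>f q\<close>
  (\<open>q \<in> Q\<close>) runs through \<open>t\<^sub>0\<close> and so meets at most two branches. Two elements of \<open>\<Gamma>\<^sub>Q\<close> in the
  same branch have nested relevant cliques wherever these meet on \<open>Q\<close>, so antipodal elements lie
  in different branches. A full antipodal triangle, or an odd antipodal path or cycle around a
  dominating hub, would then force some \<open>f q\<close> to meet three branches.\<close>

section \<open>Reachability\<close>

lemma reach_refl: "reach S E x x"
  unfolding reach_def by simp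

lemma reach_step: "E x y \<Longrightarrow> x \<in> S \<Longrightarrow> y \<in> S \<Longrightarrow> reach S E x y"
  unfolding reach_def by auto

lemma reach_trans: "reach S E x y \<Longrightarrow> reach S E y z \<Longrightarrow> reach S E x z"
  unfolding reach_def by (rule rtranclp_trans)

lemma reach_induct[consumes 1, case_names refl step]:
  assumes "reach S E x y" "P x"
    and "\<And>y z. reach S E x y \<Longrightarrow> E y z \<Longrightarrow> y \<in> S \<Longrightarrow> z \<in> S \<Longrightarrow> P y \<Longrightarrow> P z"
  shows "P y"
  using assms(1) unfolding reach_def
proof (induction rule: rtranclp_induct)
  case (step y z)
  then show ?case using assms(3)[of y z] unfolding reach_def by blast
qed (rule assms(2))

lemma reach_mono:
  assumes "S \<subseteq> S'" "reach S E x y"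
  shows "reach S' E x y"
  using assms(2) unfolding reach_def
  by (rule rtranclp_mono[THEN predicate2D, rotated]) (use assms(1) in auto)

lemma reach_sym:
  assumes "\<forall>u v. E u v \<longrightarrow> E v u" "reach S E x y"
  shows "reach S E y x"
  using assms(2) unfolding reach_def
proof (induction rule: rtranclp_induct)
  case (step y z)
  have "(\<lambda>a b. E a b \<and> a \<in> S \<and> b \<in> S) z y" using step assms(1) by blast
  then show ?case using step(3) by (rule converse_rtranclp_into_rtranclp)
qed simp

lemma reach_along_path:
  "successively E xs \<Longrightarrow> set xs \<subseteq> S \<Longrightarrow> y \<in> set xs \<Longrightarrow> reach S E (hd xs) y"
proof (induction xs)
  case (Cons x xs)
  show ?case
  proof (cases "y = x")
    case False
    then have xs: "xs \<noteq> []" "y \<in> set xs" using Cons by auto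
    then have "E x (hd xs)" "successively E xs" using Cons(2) by (auto simp: successively_Cons)
    moreover have "hd xs \<in> S" using Cons(3) xs by (cases xs) auto
    ultimately have "reach S E x (hd xs)" using Cons(3) by (auto intro: reach_step)
    then show ?thesis using Cons xs \<open>successively E xs\<close> by (auto intro: reach_trans)
  qed (simp add: reach_refl)
qed simp

lemma reach_imp_simple_path:
  assumes "reach S E x y" "x \<in> S"
  shows "\<exists>p. p \<noteq> [] \<and> distinct p \<and> set p \<subseteq> S \<and> successively E p \<and> hd p = x \<and> last p = y"
  using assms unfolding reach_def
proof (induction rule: rtranclp_induct)
  case base then show ?case by (intro exI[of _ "[x]"]) auto
next
  case (step y z)
  then obtain p where p: "p \<noteq> []" "distinct p" "set p \<subseteq> S" "successively E p" "hd p = x" "last p = y"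
    by auto
  show ?case
  proof (cases "z \<in> set p")
    case True
    then obtain p1 p2 where pp: "p = p1 @ z # p2" by (meson split_list)
    have "successively E (p1 @ [z])" using p(4) unfolding pp
      by (simp add: successively_append_iff successively_Cons)
    moreover have "hd (p1 @ [z]) = x" using p(5) pp by (cases p1) auto
    ultimately show ?thesis using p pp by (intro exI[of _ "p1 @ [z]"]) auto
  next
    case False
    have "successively E (p @ [z])" using p step(2) by (simp add: successively_append_iff)
    then show ?thesis using p False step(2) by (intro exI[of _ "p @ [z]"]) auto
  qed
qed

section \<open>Paths and convex sets in a tree\<close>

locale tree_graph =
  fixes TV :: "'b set" and TE :: "'b \<Rightarrow> 'b \<Rightarrow> bool"
  assumes tree: "tree TV TE"
begin

lemma edge_sym: "TE u v \<Longrightarrow> TE v u"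
  using tree unfolding tree_def graph_def by blast

lemma no_cycle: "\<not> is_cycle TV TE xs"
  using tree unfolding tree_def by blast

lemma tree_reach: "x \<in> TV \<Longrightarrow> y \<in> TV \<Longrightarrow> reach TV TE x y"
  using tree unfolding tree_def connected_graph_def by blast

definition tree_path :: "'b list \<Rightarrow> bool" where
  "tree_path xs \<longleftrightarrow> xs \<noteq> [] \<and> distinct xs \<and> set xs \<subseteq> TV \<and> successively TE xs"

lemma tree_path_rev: "tree_path xs \<Longrightarrow> tree_path (rev xs)"
  unfolding tree_path_def by (auto intro: successively_mono edge_sym)

lemma tree_path_infix: "tree_path (a @ b @ c) \<Longrightarrow> b \<noteq> [] \<Longrightarrow> tree_path b"
  unfolding tree_path_def by (auto simp: successively_append_iff)

lemma tree_path_singleton: "x \<in> TV \<Longrightarrow> tree_path [x]"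
  unfolding tree_path_def by auto

lemma tree_path_append:
  "tree_path xs \<Longrightarrow> tree_path ys \<Longrightarrow> set xs \<inter> set ys = {} \<Longrightarrow> TE (last xs) (hd ys) \<Longrightarrow>
   tree_path (xs @ ys)"
  unfolding tree_path_def by (auto simp: successively_append_iff)

lemma reach_imp_tree_path:
  "reach S TE x y \<Longrightarrow> x \<in> S \<Longrightarrow> S \<subseteq> TV \<Longrightarrow>
   \<exists>p. tree_path p \<and> set p \<subseteq> S \<and> hd p = x \<and> last p = y"
  using reach_imp_simple_path[of S TE x y] unfolding tree_path_def by blast

lemma tree_path_exists: "x \<in> TV \<Longrightarrow> y \<in> TV \<Longrightarrow> \<exists>p. tree_path p \<and> hd p = x \<and> last p = y"
  using reach_imp_tree_path[OF tree_reach] by blast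

text \<open>Two paths leaving \<open>x\<close> through different neighbours and ending at the same vertex close up
  a cycle, through the first vertex of the one path that lies on the other.\<close>

lemma tree_paths_same_start:
  assumes p: "tree_path (x # xs)" and p': "tree_path (x # ys)"
    and ne: "xs \<noteq> []" "ys \<noteq> []" and last: "last xs = last ys"
  shows "hd xs = hd ys"
proof (rule ccontr)
  assume hd_ne: "hd xs \<noteq> hd ys"
  have "\<exists>v\<in>set xs. v \<in> set ys" using last ne by (metis last_in_set)
  then obtain zs m zs' where xs: "xs = zs @ m # zs'" and m: "m \<in> set ys"
    and zs: "\<forall>v\<in>set zs. v \<notin> set ys"
    by (rule split_list_first_propE)
  obtain ws ws' where ys: "ys = ws @ m # ws'" using m by (meson split_list)
  have ws_ne: "zs \<noteq> [] \<or> ws \<noteq> []" using hd_ne xs ys by auto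
  have first: "tree_path (x # zs @ [m])"
    using tree_path_infix[of "[]" "x # zs @ [m]" zs'] p xs by simp
  have cycle: "tree_path (x # zs @ [m] @ rev ws)"
  proof (cases "ws = []")
    case False
    have "tree_path (ws @ [m])" using tree_path_infix[of "[x]" "ws @ [m]" ws'] p' ys False by simp
    then have "tree_path (rev ws)" "TE m (hd (rev ws))"
      using tree_path_infix[of "[m]" "rev ws" "[]"] tree_path_rev[of "ws @ [m]"] False
      by (auto simp: tree_path_def successively_append_iff hd_rev intro: edge_sym)
    moreover have "set (x # zs @ [m]) \<inter> set (rev ws) = {}"
      using p' zs ys unfolding tree_path_def by auto
    ultimately show ?thesis using tree_path_append[OF first] by fastforce
  qed (use first in simp)
  have "hd ys = (if ws = [] then m else hd ws)" using ys by (cases ws) auto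
  then have "last (x # zs @ [m] @ rev ws) = hd ys" by (auto simp: last_rev)
  moreover have "TE x (hd ys)" using p' ne(2) by (cases ys) (auto simp: tree_path_def)
  moreover have "length (x # zs @ [m] @ rev ws) \<ge> 3" using ws_ne by (cases zs; cases ws) auto
  ultimately have "is_cycle TV TE (x # zs @ [m] @ rev ws)"
    using cycle unfolding is_cycle_def tree_path_def by (auto intro: edge_sym)
  then show False using no_cycle by blast
qed

lemma tree_path_unique:
  "tree_path xs \<Longrightarrow> tree_path ys \<Longrightarrow> hd xs = hd ys \<Longrightarrow> last xs = last ys \<Longrightarrow> xs = ys"
proof (induction xs arbitrary: ys)
  case (Cons x xs)
  obtain ys' where ys: "ys = x # ys'" using Cons(3,4) by (cases ys) (auto simp: tree_path_def)
  have distinct: "distinct (x # xs)" "distinct (x # ys')" using Cons(2,3) ys by (auto simp: tree_path_def)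
  have no_return: "zs = []" if "last (x # zs) = x" "distinct (x # zs)" for zs
  proof (rule ccontr)
    assume "zs \<noteq> []"
    then have "x \<in> set zs" using that(1) last_in_set[of zs] by simp
    then show False using that(2) by simp
  qed
  have "xs = [] \<longleftrightarrow> ys' = []"
  proof
    assume "xs = []"
    then show "ys' = []" by (intro no_return) (use distinct Cons(5) ys in simp_all)
  next
    assume "ys' = []"
    then show "xs = []" by (intro no_return) (use distinct Cons(5) ys in simp_all)
  qed
  then consider "xs = []" "ys' = []" | "xs \<noteq> []" "ys' \<noteq> []" by blast
  then show ?case
  proof cases
    case 2
    have "tree_path xs" "tree_path ys'"
      using Cons(2,3) ys 2 unfolding tree_path_def by (auto simp: successively_Cons)
    moreover have "hd xs = hd ys'"
      using tree_paths_same_start[of x xs ys'] Cons(2,3,5) ys 2 by simp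
    moreover have "last xs = last ys'" using Cons(5) ys 2 by simp
    ultimately have "xs = ys'" by (rule Cons.IH)
    then show ?thesis using ys by simp
  qed (simp add: ys)
qed (simp add: tree_path_def)

lemma tree_path_subpath:
  assumes ps: "tree_path ps" and x: "x \<in> set ps" and y: "y \<in> set ps"
    and R: "tree_path R" "hd R = x" "last R = y"
  shows "set R \<subseteq> set ps"
proof -
  obtain A B where psp: "ps = A @ x # B" using x by (meson split_list)
  consider "y = x" | "y \<in> set B" | "y \<in> set A" using y psp by auto
  then show ?thesis
  proof cases
    case 1
    have "x \<in> TV" using ps x by (auto simp: tree_path_def)
    then have "R = [x]" using tree_path_unique[OF R(1) tree_path_singleton] R 1 by simp
    then show ?thesis using x by simp
  next
    case 2
    then obtain B1 B2 where Bp: "B = B1 @ y # B2" by (meson split_list)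
    have "ps = A @ (x # B1 @ [y]) @ B2" using psp Bp by simp
    then have "tree_path (x # B1 @ [y])" using tree_path_infix ps by (metis list.simps(3))
    then have "R = x # B1 @ [y]" using tree_path_unique[OF R(1)] R by simp
    then show ?thesis using psp Bp by auto
  next
    case 3
    then obtain A1 A2 where Ap: "A = A1 @ y # A2" by (meson split_list)
    have "ps = A1 @ (y # A2 @ [x]) @ B" using psp Ap by simp
    then have "tree_path (rev (y # A2 @ [x]))" using tree_path_infix ps tree_path_rev
      by (metis list.simps(3))
    then have "R = rev (y # A2 @ [x])" using tree_path_unique[OF R(1)] R by (simp add: hd_rev last_rev)
    then show ?thesis using psp Ap by auto
  qed
qed

definition tree_convex :: "'b set \<Rightarrow> bool" where
  "tree_convex S \<longleftrightarrow> S \<subseteq> TV \<and> (\<forall>R. tree_path R \<longrightarrow> hd R \<in> S \<longrightarrow> last R \<in> S \<longrightarrow> set R \<subseteq> S)"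

lemma tree_convex_path: "tree_path ps \<Longrightarrow> tree_convex (set ps)"
  unfolding tree_convex_def using tree_path_subpath by (auto simp: tree_path_def)

lemma tree_convex_Int: "tree_convex A \<Longrightarrow> tree_convex B \<Longrightarrow> tree_convex (A \<inter> B)"
  unfolding tree_convex_def by blast

text \<open>The median of \<open>a\<close>, \<open>b\<close>, \<open>c\<close>, i.e.\ the vertex where the paths from \<open>a\<close> to \<open>b\<close> and from \<open>a\<close>
  to \<open>c\<close> part, lies on all three paths between them.\<close>

lemma tree_convex_helly3:
  assumes cA: "tree_convex A" and cB: "tree_convex B" and cC: "tree_convex C"
    and a: "a \<in> B" "a \<in> C" and b: "b \<in> A" "b \<in> C" and c: "c \<in> A" "c \<in> B"
  shows "A \<inter> B \<inter> C \<noteq> {}"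
proof -
  have "a \<in> TV" "b \<in> TV" "c \<in> TV" using a b c cA cB unfolding tree_convex_def by auto
  then obtain p r where p: "tree_path p" "hd p = a" "last p = b"
    and r: "tree_path r" "hd r = a" "last r = c"
    using tree_path_exists[of a b] tree_path_exists[of a c] by blast
  have "\<exists>v\<in>set p. v \<in> set r" using p r by (metis hd_in_set tree_path_def)
  then obtain p1 m p2 where pp: "p = p1 @ m # p2" and m: "m \<in> set r"
    and p2: "\<forall>z\<in>set p2. z \<notin> set r"
    by (rule split_list_last_propE)
  obtain r1 r2 where rp: "r = r1 @ m # r2" using m by (meson split_list)
  have "tree_path (m # p2)" using p(1) pp tree_path_infix[of p1 "m # p2" "[]"] by simp
  then have pm: "tree_path (rev (m # p2))" by (rule tree_path_rev)
  have rm: "tree_path (m # r2)" using r(1) rp tree_path_infix[of r1 "m # r2" "[]"] by simp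
  have median: "tree_path (rev (m # p2) @ r2)"
  proof (cases "r2 = []")
    case False
    have "tree_path r2" "TE m (hd r2)"
      using rm False tree_path_infix[of "[m]" r2 "[]"] by (auto simp: tree_path_def successively_Cons)
    moreover have "set (rev (m # p2)) \<inter> set r2 = {}" using p2 rp r(1) by (auto simp: tree_path_def)
    ultimately show ?thesis using tree_path_append[OF pm] by (simp add: last_rev)
  qed (use pm in simp)
  have "hd (rev (m # p2) @ r2) = b" using p(3) pp by (cases p2 rule: rev_cases) auto
  moreover have "last (rev (m # p2) @ r2) = c" using r(3) rp by (cases r2) auto
  ultimately have "set (rev (m # p2) @ r2) \<subseteq> A"
    using cA median b c unfolding tree_convex_def by blast
  then have "m \<in> A" by simp
  moreover have "m \<in> C" using cC p a b pp unfolding tree_convex_def by auto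
  moreover have "m \<in> B" using cB r a c m unfolding tree_convex_def by auto
  ultimately show ?thesis by blast
qed

lemma tree_convex_helly:
  "finite F \<Longrightarrow> F \<noteq> {} \<Longrightarrow> \<forall>A\<in>F. tree_convex A \<Longrightarrow> \<forall>A\<in>F. \<forall>B\<in>F. A \<inter> B \<noteq> {} \<Longrightarrow> \<Inter>F \<noteq> {}"
proof (induction "card F" arbitrary: F rule: less_induct)
  case less
  obtain A where A: "A \<in> F" using less(3) by blast
  show ?case
  proof (cases "F = {A}")
    case True then show ?thesis using less(5) A by auto
  next
    case False
    define F' where "F' = F - {A}"
    have F'ne: "F' \<noteq> {}" using False A F'_def by auto
    define G where "G = (\<lambda>B. A \<inter> B) ` F'"
    have "card G \<le> card F'" unfolding G_def using less(2) F'_def by (simp add: card_image_le)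
    also have "card F' < card F" unfolding F'_def using less(2) A by (meson card_Diff1_less)
    finally have "card G < card F" .
    moreover have "finite G" "G \<noteq> {}" using less(2) F'ne unfolding G_def F'_def by auto
    moreover have "\<forall>X\<in>G. tree_convex X" unfolding G_def F'_def using less(4) A tree_convex_Int by auto
    moreover have "\<forall>X\<in>G. \<forall>Y\<in>G. X \<inter> Y \<noteq> {}"
    proof (intro ballI)
      fix X Y assume "X \<in> G" "Y \<in> G"
      then obtain B B' where B: "B \<in> F" "B' \<in> F" "X = A \<inter> B" "Y = A \<inter> B'"
        unfolding G_def F'_def by auto
      obtain a where "a \<in> B \<inter> B'" using less(5) B by blast
      moreover obtain b where "b \<in> A \<inter> B'" using less(5) B A by blast
      moreover obtain c where "c \<in> A \<inter> B" using less(5) B A by blast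
      ultimately have "A \<inter> B \<inter> B' \<noteq> {}" using tree_convex_helly3[of A B B'] less(4) A B by blast
      then show "X \<inter> Y \<noteq> {}" using B by blast
    qed
    ultimately have "\<Inter>G \<noteq> {}" using less(1) by blast
    then obtain x where x: "x \<in> \<Inter>G" by blast
    have "x \<in> A" using x F'ne unfolding G_def by auto
    moreover have "\<forall>B\<in>F'. x \<in> B" using x unfolding G_def by blast
    ultimately show ?thesis unfolding F'_def by blast
  qed
qed

text \<open>A connected set \<open>S\<close> not containing \<open>t\<^sub>0\<close> has a gate \<open>u\<close>: the first vertex of \<open>S\<close> on the path from
  \<open>t\<^sub>0\<close> to \<open>S\<close>. By convexity every path through \<open>t\<^sub>0\<close> that meets \<open>S\<close> passes through it.\<close>

lemma connected_set_gate:
  assumes S: "S \<subseteq> TV" "S \<noteq> {}" "\<forall>x\<in>S. \<forall>y\<in>S. reach S TE x y" and t0: "t0 \<in> TV" "t0 \<notin> S"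
  shows "\<exists>u\<in>S. \<forall>ps. tree_path ps \<longrightarrow> t0 \<in> set ps \<longrightarrow> set ps \<inter> S \<noteq> {} \<longrightarrow> u \<in> set ps"
proof -
  obtain s0 where s0: "s0 \<in> S" using S by blast
  obtain p where p: "tree_path p" "hd p = t0" "last p = s0" using tree_path_exists S t0 s0 by blast
  have "\<exists>v\<in>set p. v \<in> S" using p s0 by (metis last_in_set tree_path_def)
  then obtain p1 u p2 where pp: "p = p1 @ u # p2" and u: "u \<in> S" and p1: "\<forall>v\<in>set p1. v \<notin> S"
    by (rule split_list_first_propE)
  have p1_ne: "p1 \<noteq> []" using pp p(2) u t0 by (cases p1) auto
  have to_gate: "tree_path (p1 @ [u])" using tree_path_infix[of "[]" "p1 @ [u]" p2] p(1) pp by simp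
  show ?thesis
  proof (intro bexI[OF _ u] allI impI)
    fix ps assume ps: "tree_path ps" "t0 \<in> set ps" "set ps \<inter> S \<noteq> {}"
    then obtain s where s: "s \<in> set ps" "s \<in> S" by blast
    obtain W where W: "tree_path W" "set W \<subseteq> S" "hd W = u" "last W = s"
      using reach_imp_tree_path[of S u s] S u s by blast
    have "tree_path p1" "TE (last p1) u"
      using to_gate p1_ne tree_path_infix[of "[]" p1 "[u]"]
      by (auto simp: tree_path_def successively_append_iff)
    moreover have "set p1 \<inter> set W = {}" using W(2) p1 by blast
    ultimately have L: "tree_path (p1 @ W)" using tree_path_append W(1,3) by simp
    have "hd (p1 @ W) = t0" using p1_ne pp p(2) by simp
    moreover have "last (p1 @ W) = s" using W by (simp add: tree_path_def)
    ultimately have "set (p1 @ W) \<subseteq> set ps" using tree_path_subpath[OF ps(1,2) s(1) L] by blast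
    moreover have "u \<in> set W" using W by (metis hd_in_set tree_path_def)
    ultimately show "u \<in> set ps" by auto
  qed
qed

definition branch :: "'b \<Rightarrow> 'b \<Rightarrow> 'b set" where
  "branch t0 x = {y. reach (TV - {t0}) TE x y}"

lemma branch_self: "x \<in> branch t0 x"
  unfolding branch_def by (simp add: reach_refl)

lemma branch_eq:
  assumes r: "reach (TV - {t0}) TE x y"
  shows "branch t0 x = branch t0 y"
proof -
  have r': "reach (TV - {t0}) TE y x" using reach_sym[OF _ r] edge_sym by blast
  show ?thesis
    unfolding branch_def using reach_trans[OF r] reach_trans[OF r'] by blast
qed

lemma branch_eq_imp_reach: "branch t0 x = branch t0 y \<Longrightarrow> reach (TV - {t0}) TE x y"
  using branch_self[of y t0] unfolding branch_def by blast

lemma opposite_sides_not_reach: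
  assumes xs: "tree_path (A @ t0 # B)" and u: "u \<in> set A" and u': "u' \<in> set B"
  shows "\<not> reach (TV - {t0}) TE u u'"
proof
  assume r: "reach (TV - {t0}) TE u u'"
  obtain A1 A2 where Ap: "A = A1 @ u # A2" using u by (meson split_list)
  obtain B1 B2 where Bp: "B = B1 @ u' # B2" using u' by (meson split_list)
  have "A @ t0 # B = A1 @ (u # A2 @ t0 # B1 @ [u']) @ B2" using Ap Bp by simp
  then have L: "tree_path (u # A2 @ t0 # B1 @ [u'])" using tree_path_infix xs by (metis list.simps(3))
  have "u \<in> TV" "u \<noteq> t0" using xs Ap by (auto simp: tree_path_def)
  then obtain M where M: "tree_path M" "set M \<subseteq> TV - {t0}" "hd M = u" "last M = u'"
    using reach_imp_tree_path[OF r] by blast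
  have "M = u # A2 @ t0 # B1 @ [u']" using tree_path_unique[OF M(1) L] M by simp
  then show False using M(2) by auto
qed

lemma same_side_nested:
  assumes xs: "tree_path (A @ t0 # B)" and u: "u \<in> set B" and u': "u' \<in> set B"
  shows "\<exists>R. tree_path R \<and> hd R = t0 \<and> (last R = u \<and> u' \<in> set R \<or> last R = u' \<and> u \<in> set R)"
proof -
  obtain B1 B2 where Bp: "B = B1 @ u # B2" using u by (meson split_list)
  show ?thesis
  proof (cases "u' \<in> set (B1 @ [u])")
    case True
    have "A @ t0 # B = A @ (t0 # B1 @ [u]) @ B2" using Bp by simp
    then have "tree_path (t0 # B1 @ [u])" using tree_path_infix xs by (metis list.simps(3))
    then show ?thesis using True by (intro exI[of _ "t0 # B1 @ [u]"]) auto
  next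
    case False
    then have "u' \<in> set B2" using u' Bp by auto
    then obtain B3 B4 where B2p: "B2 = B3 @ u' # B4" by (meson split_list)
    have "A @ t0 # B = A @ (t0 # B1 @ u # B3 @ [u']) @ B4" using Bp B2p by simp
    then have "tree_path (t0 # B1 @ u # B3 @ [u'])" using tree_path_infix xs by (metis list.simps(3))
    then show ?thesis by (intro exI[of _ "t0 # B1 @ u # B3 @ [u']"]) auto
  qed
qed

text \<open>Two vertices of a path through \<open>t\<^sub>0\<close> that lie in the same branch at \<open>t\<^sub>0\<close> are on the same
  side of \<open>t\<^sub>0\<close>, so one of them lies between \<open>t\<^sub>0\<close> and the other.\<close>

lemma same_branch_nested:
  assumes xs: "tree_path xs" and t: "t0 \<in> set xs" and u: "u \<in> set xs" "u \<noteq> t0"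
    and u': "u' \<in> set xs" "u' \<noteq> t0" and r: "reach (TV - {t0}) TE u u'"
  shows "\<exists>R. tree_path R \<and> hd R = t0 \<and> (last R = u \<and> u' \<in> set R \<or> last R = u' \<and> u \<in> set R)"
proof -
  obtain A B where xsp: "xs = A @ t0 # B" using t by (meson split_list)
  have r': "reach (TV - {t0}) TE u' u" using reach_sym[OF _ r] edge_sym by blast
  have rev: "tree_path (rev B @ t0 # rev A)" using tree_path_rev[OF xs] xsp by simp
  consider "u \<in> set A" "u' \<in> set A" | "u \<in> set B" "u' \<in> set B"
    | "u \<in> set A" "u' \<in> set B" | "u \<in> set B" "u' \<in> set A"
    using u u' xsp by auto
  then show ?thesis
  proof cases
    case 1 then show ?thesis using same_side_nested[OF rev] by simp
  next
    case 2 then show ?thesis using same_side_nested xs xsp by blast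
  next
    case 3 then show ?thesis using opposite_sides_not_reach r xs xsp by blast
  next
    case 4 then show ?thesis using opposite_sides_not_reach r' xs xsp by blast
  qed
qed

lemma card_branches_on_path:
  assumes xs: "tree_path xs" and t: "t0 \<in> set xs"
  shows "finite (branch t0 ` (set xs - {t0}))" "card (branch t0 ` (set xs - {t0})) \<le> 2"
proof -
  obtain A B where xsp: "xs = A @ t0 # B" using t by (meson split_list)
  have sides: "set A \<subseteq> TV - {t0}" "set B \<subseteq> TV - {t0}" "successively TE A" "successively TE B"
    using xs xsp by (auto simp: tree_path_def successively_append_iff successively_Cons)
  have sub: "branch t0 ` (set xs - {t0}) \<subseteq> {branch t0 (hd A), branch t0 (hd B)}"
  proof
    fix z assume "z \<in> branch t0 ` (set xs - {t0})"
    then obtain y where y: "y \<in> set A \<or> y \<in> set B" "z = branch t0 y" using xsp by auto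
    from y(1) show "z \<in> {branch t0 (hd A), branch t0 (hd B)}"
    proof
      assume "y \<in> set A"
      then have "reach (TV - {t0}) TE (hd A) y" by (rule reach_along_path[OF sides(3,1)])
      then show ?thesis using branch_eq y(2) by simp
    next
      assume "y \<in> set B"
      then have "reach (TV - {t0}) TE (hd B) y" by (rule reach_along_path[OF sides(4,2)])
      then show ?thesis using branch_eq y(2) by simp
    qed
  qed
  have fin: "finite {branch t0 (hd A), branch t0 (hd B)}" by simp
  then show "finite (branch t0 ` (set xs - {t0}))" using sub by (rule finite_subset[rotated])
  have "card (branch t0 ` (set xs - {t0})) \<le> card {branch t0 (hd A), branch t0 (hd B)}"
    using card_mono[OF fin sub] .
  also have "\<dots> \<le> 2" by (simp add: card_insert_if)
  finally show "card (branch t0 ` (set xs - {t0})) \<le> 2" .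
qed

lemma tree_convex_path_set: "is_path_set TV TE P \<Longrightarrow> tree_convex P"
  unfolding is_path_set_def using tree_convex_path tree_path_def by auto

lemma path_sets_common_node:
  assumes "finite A" "A \<noteq> {}" "\<forall>v\<in>A. is_path_set TV TE (f v)" "\<forall>u\<in>A. \<forall>v\<in>A. f u \<inter> f v \<noteq> {}"
  shows "\<exists>t\<in>TV. \<forall>v\<in>A. t \<in> f v"
proof -
  have "\<Inter>(f ` A) \<noteq> {}"
    by (rule tree_convex_helly) (use assms tree_convex_path_set in auto)
  moreover have "f v \<subseteq> TV" if "v \<in> A" for v
    using assms(3) that unfolding is_path_set_def by auto
  ultimately show ?thesis using assms(2) by blast
qed

end

section \<open>The attachedness graph\<close>

lemma attached_sym: "attached E Q g h \<Longrightarrow> attached E Q h g"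
  unfolding attached_def by blast

lemma antipodal_sym: "antipodal E Q g h \<Longrightarrow> antipodal E Q h g"
  unfolding antipodal_def by blast

lemma att_edge_sym: "att_edge V E Q X Y c \<Longrightarrow> att_edge V E Q Y X c"
  unfolding att_edge_def using attached_sym antipodal_sym by metis

lemma att_edge_vertices: "att_edge V E Q X Y c \<Longrightarrow> X \<in> att_vertices V E Q \<and> Y \<in> att_vertices V E Q"
  unfolding att_edge_def by blast

lemma alternating_iff_parity:
  assumes alt: "\<forall>i. a \<le> i \<longrightarrow> i < b \<longrightarrow> (s i \<longleftrightarrow> \<not> s (Suc i))"
  shows "a \<le> j \<Longrightarrow> j \<le> b \<Longrightarrow> s j \<longleftrightarrow> (s a \<longleftrightarrow> even (j - a))"
proof (induction j)
  case (Suc j)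
  show ?case
  proof (cases "Suc j = a")
    case False
    then have "a \<le> j" "j < b" using Suc by auto
    then have "s (Suc j) \<longleftrightarrow> \<not> s j" using alt by blast
    moreover have "Suc j - a = Suc (j - a)" using \<open>a \<le> j\<close> by simp
    ultimately show ?thesis using Suc \<open>a \<le> j\<close> \<open>j < b\<close> by simp
  qed simp
qed simp

text \<open>The forbidden configurations are excluded using only the following properties of a tree
  model: each element \<open>\<gamma>\<close> of \<open>\<Gamma>\<^sub>Q\<close> lies in one branch \<open>branch_of \<gamma>\<close> at the common node of the
  paths of \<open>Q\<close>, and \<open>branches_at q\<close> is the set of at most two branches met by the path of \<open>q\<close>.\<close>

locale branch_structure =
  fixes V :: "'a set" and E :: "'a \<Rightarrow> 'a \<Rightarrow> bool" and Q :: "'a set"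
    and branch_of :: "'a set \<Rightarrow> 'c" and branches_at :: "'a \<Rightarrow> 'c set"
  assumes relevant_branch_at: "g \<in> Gamma V E Q \<Longrightarrow> relevant E Q g K \<Longrightarrow> q \<in> K \<Longrightarrow> q \<in> Q \<Longrightarrow>
      branch_of g \<in> branches_at q"
    and same_branch_traces_comparable: "g \<in> Gamma V E Q \<Longrightarrow> g' \<in> Gamma V E Q \<Longrightarrow>
      branch_of g = branch_of g' \<Longrightarrow> relevant E Q g K \<Longrightarrow> relevant E Q g' K' \<Longrightarrow>
      K \<inter> K' \<inter> Q \<noteq> {} \<Longrightarrow> K \<inter> Q \<subseteq> K' \<inter> Q \<or> K' \<inter> Q \<subseteq> K \<inter> Q"
    and relevant_trace_max: "g \<in> Gamma V E Q \<Longrightarrow>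
      \<exists>K. relevant E Q g K \<and> (\<forall>K'. relevant E Q g K' \<longrightarrow> K' \<inter> Q \<subseteq> K \<inter> Q)"
    and card_branches_at: "q \<in> Q \<Longrightarrow> finite (branches_at q) \<and> card (branches_at q) \<le> 2"
begin

lemma branches_at_split:
  assumes q: "q \<in> Q" and b: "b \<in> branches_at q"
    and B: "B \<subseteq> branches_at q" "B \<noteq> {}" and B': "B' \<subseteq> branches_at q" "B' \<noteq> {}"
    and disj: "B \<inter> B' = {}"
  shows "b \<in> B \<union> B'"
proof (rule ccontr)
  assume b_out: "b \<notin> B \<union> B'"
  obtain x y where xy: "x \<in> B" "y \<in> B'" using B B' by blast
  have "{b, x, y} \<subseteq> branches_at q" using b B B' xy by blast
  then have "card {b, x, y} \<le> 2" using card_branches_at[OF q] by (meson card_mono order_trans)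
  moreover have "b \<noteq> x" "b \<noteq> y" "x \<noteq> y" using b_out xy disj by auto
  then have "card {b, x, y} = 3" by simp
  ultimately show False by simp
qed

definition trace :: "'a set \<Rightarrow> 'a set" where
  "trace g = \<Union>{K \<inter> Q | K. relevant E Q g K}"

definition uniform_trace :: "'a set \<Rightarrow> bool" where
  "uniform_trace g \<longleftrightarrow> (\<forall>K. relevant E Q g K \<longrightarrow> K \<inter> Q = trace g)"

lemma relevant_subset_trace: "relevant E Q g K \<Longrightarrow> K \<inter> Q \<subseteq> trace g"
  unfolding trace_def by blast

lemma trace_subset: "trace g \<subseteq> Q"
  unfolding trace_def by blast

lemma trace_attained:
  assumes g: "g \<in> Gamma V E Q"
  obtains K where "relevant E Q g K" "K \<inter> Q = trace g"
proof -
  obtain K where K: "relevant E Q g K" "\<forall>K'. relevant E Q g K' \<longrightarrow> K' \<inter> Q \<subseteq> K \<inter> Q"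
    using relevant_trace_max[OF g] by blast
  have "trace g \<subseteq> K \<inter> Q" unfolding trace_def using K(2) by blast
  then show ?thesis using that K(1) relevant_subset_trace[OF K(1)] by blast
qed

lemma trace_nonempty: "g \<in> Gamma V E Q \<Longrightarrow> trace g \<noteq> {}"
  by (metis trace_attained relevant_def)

lemma trace_branch_at: "g \<in> Gamma V E Q \<Longrightarrow> q \<in> trace g \<Longrightarrow> branch_of g \<in> branches_at q"
  unfolding trace_def using relevant_branch_at by blast

lemma dominated_trace_subset:
  assumes g: "g \<in> Gamma V E Q" and h: "h \<in> Gamma V E Q" and d: "dominated E Q g h"
  shows "trace g \<subseteq> trace h"
proof -
  obtain Kg where Kg: "relevant E Q g Kg" "Kg \<inter> Q = trace g" using trace_attained[OF g] by blast
  obtain Kh where Kh: "relevant E Q h Kh" "Kh \<inter> Q = trace h" using trace_attained[OF h] by blast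
  obtain K1 K2 where K12: "relevant E Q g K1" "relevant E Q h K2" "K1 \<inter> K2 \<inter> Q \<noteq> {}"
    using d unfolding dominated_def attached_def by blast
  have "K1 \<inter> Kh \<inter> Q \<noteq> {}" using relevant_subset_trace[OF K12(2)] Kh K12(3) by blast
  then have "\<forall>K. relevant E Q g K \<longrightarrow> K \<inter> Q \<subseteq> Kh \<inter> Q"
    using d Kh(1) K12(1) unfolding dominated_def by blast
  then show ?thesis using Kg Kh by blast
qed

lemma dominated_same_trace_uniform:
  assumes g: "g \<in> Gamma V E Q" and d: "dominated E Q g h" and eq: "trace g = trace h"
  shows "uniform_trace h"
  unfolding uniform_trace_def
proof (intro allI impI)
  fix K' assume K': "relevant E Q h K'"
  obtain Kg where Kg: "relevant E Q g Kg" "Kg \<inter> Q = trace g" using trace_attained[OF g] by blast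
  have sub: "K' \<inter> Q \<subseteq> trace h" using relevant_subset_trace[OF K'] .
  have ne: "K' \<inter> Q \<noteq> {}" using K' unfolding relevant_def by blast
  have "(\<forall>K. relevant E Q g K \<longrightarrow> K \<inter> Q \<subseteq> K' \<inter> Q) \<or> (\<forall>K. relevant E Q g K \<longrightarrow> K \<inter> K' \<inter> Q = {})"
    using d K' unfolding dominated_def by blast
  then show "K' \<inter> Q = trace h"
  proof
    assume "\<forall>K. relevant E Q g K \<longrightarrow> K \<inter> Q \<subseteq> K' \<inter> Q"
    then have "trace g \<subseteq> K' \<inter> Q" using Kg by blast
    then show ?thesis using sub eq by blast
  next
    assume "\<forall>K. relevant E Q g K \<longrightarrow> K \<inter> K' \<inter> Q = {}"
    then have "Kg \<inter> K' \<inter> Q = {}" using Kg by blast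
    then show ?thesis using Kg(2) eq sub ne by blast
  qed
qed

lemma identified_trace:
  assumes "identified E Q (Gamma V E Q) g h" "g \<in> Gamma V E Q"
  shows "h \<in> Gamma V E Q \<and> trace g = trace h \<and> (g = h \<or> uniform_trace g \<and> uniform_trace h)"
  using assms(1) unfolding identified_def
proof (induction rule: rtranclp_induct)
  case (step y z)
  then have yz: "y \<in> Gamma V E Q" "z \<in> Gamma V E Q" "dominated E Q y z" "dominated E Q z y" by auto
  then have "trace y = trace z" using dominated_trace_subset by blast
  then have "uniform_trace y" "uniform_trace z" using dominated_same_trace_uniform yz by metis+
  then show ?case using step.IH yz \<open>trace y = trace z\<close> by auto
qed (use assms(2) in simp)

definition class_trace :: "'a set set \<Rightarrow> 'a set" where
  "class_trace X = trace (SOME g. g \<in> X)"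

definition class_branches :: "'a set set \<Rightarrow> 'c set" where
  "class_branches X = branch_of ` X"

lemma att_vertexE:
  assumes X: "X \<in> att_vertices V E Q"
  obtains g where "g \<in> X"
    "\<And>g'. g' \<in> X \<Longrightarrow> g' \<in> Gamma V E Q \<and> trace g' = trace g \<and> (g = g' \<or> uniform_trace g \<and> uniform_trace g')"
proof -
  obtain g where g: "g \<in> Gamma V E Q" "X = {g' \<in> Gamma V E Q. identified E Q (Gamma V E Q) g g'}"
    using X unfolding att_vertices_def by blast
  have "g \<in> X" using g unfolding identified_def by simp
  moreover have "g' \<in> Gamma V E Q \<and> trace g' = trace g \<and> (g = g' \<or> uniform_trace g \<and> uniform_trace g')"
    if "g' \<in> X" for g'
    using identified_trace[of g g'] that g by auto
  ultimately show ?thesis using that by blast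
qed

lemma att_vertex_nonempty: "X \<in> att_vertices V E Q \<Longrightarrow> X \<noteq> {}"
  by (metis att_vertexE empty_iff)

lemma att_vertex_subset: "X \<in> att_vertices V E Q \<Longrightarrow> g \<in> X \<Longrightarrow> g \<in> Gamma V E Q"
  by (metis att_vertexE)

lemma trace_eq_class_trace:
  assumes X: "X \<in> att_vertices V E Q" and g: "g \<in> X"
  shows "trace g = class_trace X"
proof -
  obtain g0 where g0: "g0 \<in> X" "\<And>g'. g' \<in> X \<Longrightarrow> trace g' = trace g0"
    using att_vertexE[OF X] by metis
  have "(SOME g. g \<in> X) \<in> X" using g0(1) by (rule someI)
  then show ?thesis unfolding class_trace_def using g0(2) g by metis
qed

lemma class_relevant_trace:
  assumes X: "X \<in> att_vertices V E Q" and g0: "g0 \<in> X" and g: "g \<in> X" and K: "relevant E Q g0 K"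
  obtains K' where "relevant E Q g K'" "K' \<inter> Q = K \<inter> Q"
proof (cases "g = g0")
  case False
  obtain r where r: "r \<in> X"
    "\<And>g'. g' \<in> X \<Longrightarrow> g' \<in> Gamma V E Q \<and> trace g' = trace r \<and> (r = g' \<or> uniform_trace r \<and> uniform_trace g')"
    using att_vertexE[OF X] by blast
  have "uniform_trace g0" "trace g = trace g0" using r(2)[OF g0] r(2)[OF g] False by metis+
  moreover obtain K' where "relevant E Q g K'" "K' \<inter> Q = trace g"
    using trace_attained r(2)[OF g] by blast
  ultimately show ?thesis using that K unfolding uniform_trace_def by auto
qed (use that K in blast)

lemma class_branches_at: "X \<in> att_vertices V E Q \<Longrightarrow> q \<in> class_trace X \<Longrightarrow> class_branches X \<subseteq> branches_at q"
  unfolding class_branches_def by (metis att_vertex_subset trace_eq_class_trace trace_branch_at image_subset_iff)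

lemma class_branches_nonempty: "X \<in> att_vertices V E Q \<Longrightarrow> class_branches X \<noteq> {}"
  unfolding class_branches_def using att_vertex_nonempty by blast

lemma class_trace_nonempty: "X \<in> att_vertices V E Q \<Longrightarrow> class_trace X \<noteq> {}"
  by (metis att_vertex_nonempty att_vertex_subset trace_eq_class_trace trace_nonempty ex_in_conv)

lemma class_trace_subset: "class_trace X \<subseteq> Q"
  unfolding class_trace_def using trace_subset by blast

lemma antipodal_edge_traces_meet:
  assumes e: "att_edge V E Q X Y Antipodal"
  shows "class_trace X \<inter> class_trace Y \<noteq> {}"
proof -
  obtain g h K K' where gh: "g \<in> X" "h \<in> Y" and K: "relevant E Q g K" "relevant E Q h K'"
    "K \<inter> K' \<inter> Q \<noteq> {}"
    using e unfolding att_edge_def antipodal_def by blast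
  have "trace g = class_trace X" "trace h = class_trace Y"
    using trace_eq_class_trace att_edge_vertices[OF e] gh by blast+
  then show ?thesis using relevant_subset_trace[OF K(1)] relevant_subset_trace[OF K(2)] K(3) by blast
qed

lemma antipodal_edge_branches_disjoint:
  assumes e: "att_edge V E Q X Y Antipodal"
  shows "class_branches X \<inter> class_branches Y = {}"
proof (rule ccontr)
  note XY = att_edge_vertices[OF e]
  obtain g0 h0 K K' where gh: "g0 \<in> X" "h0 \<in> Y" and K: "relevant E Q g0 K" "relevant E Q h0 K'"
    "K \<inter> K' \<inter> Q \<noteq> {}" "\<not> K \<inter> Q \<subseteq> K' \<inter> Q" "\<not> K' \<inter> Q \<subseteq> K \<inter> Q"
    using e unfolding att_edge_def antipodal_def by blast
  assume "class_branches X \<inter> class_branches Y \<noteq> {}"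
  then obtain g h where g: "g \<in> X" and h: "h \<in> Y" and b: "branch_of g = branch_of h"
    unfolding class_branches_def by auto
  obtain R where R: "relevant E Q g R" "R \<inter> Q = K \<inter> Q"
    using class_relevant_trace[OF conjunct1[OF XY] gh(1) g K(1)] by blast
  obtain R' where R': "relevant E Q h R'" "R' \<inter> Q = K' \<inter> Q"
    using class_relevant_trace[OF conjunct2[OF XY] gh(2) h K(2)] by blast
  have "R \<inter> R' \<inter> Q \<noteq> {}" using R(2) R'(2) K(3) by blast
  then have "R \<inter> Q \<subseteq> R' \<inter> Q \<or> R' \<inter> Q \<subseteq> R \<inter> Q"
    using same_branch_traces_comparable att_vertex_subset XY g h b R(1) R'(1) by blast
  then show False using R(2) R'(2) K(4,5) by simp
qed

lemma dominance_edge_traces_nested: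
  assumes e: "att_edge V E Q X Y Dominance"
  shows "class_trace X \<inter> class_trace Y \<noteq> {} \<and> (class_trace X \<subseteq> class_trace Y \<or> class_trace Y \<subseteq> class_trace X)"
proof -
  note XY = att_edge_vertices[OF e]
  obtain g h where gh: "g \<in> X" "h \<in> Y" "attached E Q g h" "\<not> antipodal E Q g h"
    using e unfolding att_edge_def by auto
  have G: "g \<in> Gamma V E Q" "h \<in> Gamma V E Q" using att_vertex_subset XY gh by blast+
  obtain K K' where KK: "relevant E Q g K" "relevant E Q h K'" "K \<inter> K' \<inter> Q \<noteq> {}"
    using gh(3) unfolding attached_def by blast
  have t: "trace g \<inter> trace h \<noteq> {}"
    using relevant_subset_trace[OF KK(1)] relevant_subset_trace[OF KK(2)] KK(3) by blast
  obtain Kg where Kg: "relevant E Q g Kg" "Kg \<inter> Q = trace g" using trace_attained[OF G(1)] by blast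
  obtain Kh where Kh: "relevant E Q h Kh" "Kh \<inter> Q = trace h" using trace_attained[OF G(2)] by blast
  have "Kg \<inter> Kh \<inter> Q \<noteq> {}" using t Kg Kh by blast
  then have "Kg \<inter> Q \<subseteq> Kh \<inter> Q \<or> Kh \<inter> Q \<subseteq> Kg \<inter> Q"
    using gh(4) Kg Kh unfolding antipodal_def by blast
  then show ?thesis using t trace_eq_class_trace XY gh Kg Kh by auto
qed

text \<open>The branches of three classes whose traces share \<open>q\<close> lie among the at most two branches
  at \<open>q\<close>, and an antipodal edge separates branches.\<close>

lemma branch_in_antipodal_pair:
  assumes c: "c \<in> C" and C: "C \<in> att_vertices V E Q" and e: "att_edge V E Q X Y Antipodal"
    and q: "q \<in> class_trace C" "q \<in> class_trace X" "q \<in> class_trace Y"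
  shows "branch_of c \<in> class_branches X \<union> class_branches Y"
proof (rule branches_at_split)
  show "q \<in> Q" using q class_trace_subset by blast
  show "branch_of c \<in> branches_at q"
    using class_branches_at[OF C q(1)] c unfolding class_branches_def by blast
  show "class_branches X \<subseteq> branches_at q" "class_branches Y \<subseteq> branches_at q"
    "class_branches X \<noteq> {}" "class_branches Y \<noteq> {}"
    using class_branches_at class_branches_nonempty att_edge_vertices[OF e] q by blast+
  show "class_branches X \<inter> class_branches Y = {}" by (rule antipodal_edge_branches_disjoint[OF e])
qed

lemma hub_antipodal_pair:
  assumes c: "c \<in> C" and e1: "att_edge V E Q C X Dominance" and e2: "att_edge V E Q C Y Dominance"
    and e3: "att_edge V E Q X Y Antipodal"
  shows "branch_of c \<in> class_branches X \<longleftrightarrow> branch_of c \<notin> class_branches Y"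
proof -
  have C: "C \<in> att_vertices V E Q" using att_edge_vertices[OF e1] by blast
  obtain q where q: "q \<in> class_trace C" "q \<in> class_trace X" "q \<in> class_trace Y"
  proof (cases "class_trace X \<subseteq> class_trace C \<or> class_trace Y \<subseteq> class_trace C")
    case True then show ?thesis using that antipodal_edge_traces_meet[OF e3] by blast
  next
    case False
    then have "class_trace C \<subseteq> class_trace X" "class_trace C \<subseteq> class_trace Y"
      using dominance_edge_traces_nested[OF e1] dominance_edge_traces_nested[OF e2] by auto
    moreover obtain q where "q \<in> class_trace C" using class_trace_nonempty C by blast
    ultimately show ?thesis using that by blast
  qed
  then show ?thesis
    using branch_in_antipodal_pair[OF c C e3] antipodal_edge_branches_disjoint[OF e3] by blast
qed

lemma antipodal_path_dominated_end:
  assumes c: "c \<in> C" and e1: "att_edge V E Q C X Antipodal" and e2: "att_edge V E Q X Y Antipodal"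
    and e3: "att_edge V E Q C Y Dominance"
  shows "branch_of c \<in> class_branches Y"
proof -
  have C: "C \<in> att_vertices V E Q" using att_edge_vertices[OF e1] by blast
  obtain q where q: "q \<in> class_trace C" "q \<in> class_trace X" "q \<in> class_trace Y"
    using dominance_edge_traces_nested[OF e3] antipodal_edge_traces_meet[OF e1]
      antipodal_edge_traces_meet[OF e2] by blast
  moreover have "branch_of c \<in> class_branches C" using c unfolding class_branches_def by blast
  ultimately show ?thesis
    using branch_in_antipodal_pair[OF c C e2] antipodal_edge_branches_disjoint[OF e1] by blast
qed

lemma no_full_antipodal_triangle: "\<not> has_full_antipodal_triangle V E Q"
proof
  assume "has_full_antipodal_triangle V E Q"
  then obtain X Y Z where e: "att_edge V E Q X Y Antipodal" "att_edge V E Q Y Z Antipodal"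
    "att_edge V E Q X Z Antipodal" and "neighboring_set E Q {X, Y, Z}"
    unfolding has_full_antipodal_triangle_def by blast
  then obtain v where v: "v \<in> Q" "\<forall>W\<in>{X, Y, Z}. \<exists>g\<in>W. neighboring_sub E Q g v"
    unfolding neighboring_set_def by blast
  note av = att_edge_vertices[OF e(1)] att_edge_vertices[OF e(2)]
  have at_v: "\<exists>b\<in>class_branches W. b \<in> branches_at v" if W: "W \<in> {X, Y, Z}" for W
  proof -
    obtain g K where g: "g \<in> W" "relevant E Q g K" "v \<in> K"
      using v W unfolding neighboring_sub_def by blast
    have "W \<in> att_vertices V E Q" using W av by blast
    then have "g \<in> Gamma V E Q" using g(1) by (rule att_vertex_subset)
    then have "branch_of g \<in> branches_at v" using g(2,3) v(1) by (rule relevant_branch_at)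
    then show ?thesis using g(1) unfolding class_branches_def by blast
  qed
  obtain x y z where x: "x \<in> class_branches X" "x \<in> branches_at v"
    and y: "y \<in> class_branches Y" "y \<in> branches_at v" and z: "z \<in> class_branches Z" "z \<in> branches_at v"
    using at_v[of X] at_v[of Y] at_v[of Z] by blast
  have "x \<noteq> y" "z \<noteq> y" "z \<noteq> x"
    using x(1) y(1) z(1) antipodal_edge_branches_disjoint[OF e(1)]
      antipodal_edge_branches_disjoint[OF e(2)] antipodal_edge_branches_disjoint[OF e(3)] by blast+
  moreover have "z \<in> {x} \<union> {y}"
    by (rule branches_at_split[OF v(1) z(2)]) (use x(2) y(2) \<open>x \<noteq> y\<close> in auto)
  ultimately show False by blast
qed

lemma rim_alternates:
  assumes c: "c \<in> C" and "a \<le> b"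
    and hub: "\<And>i. a \<le> i \<Longrightarrow> i \<le> b \<Longrightarrow> att_edge V E Q C (\<phi> i) Dominance"
    and rim: "\<And>i. a \<le> i \<Longrightarrow> i < b \<Longrightarrow> att_edge V E Q (\<phi> i) (\<phi> (Suc i)) Antipodal"
  shows "branch_of c \<in> class_branches (\<phi> b) \<longleftrightarrow>
    (branch_of c \<in> class_branches (\<phi> a) \<longleftrightarrow> even (b - a))"
proof (rule alternating_iff_parity[where s = "\<lambda>i. branch_of c \<in> class_branches (\<phi> i)"])
  show "\<forall>i. a \<le> i \<longrightarrow> i < b \<longrightarrow>
      (branch_of c \<in> class_branches (\<phi> i) \<longleftrightarrow> \<not> branch_of c \<in> class_branches (\<phi> (Suc i)))"
  proof (intro allI impI)
    fix i assume "a \<le> i" "i < b"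
    then show "branch_of c \<in> class_branches (\<phi> i) \<longleftrightarrow> \<not> branch_of c \<in> class_branches (\<phi> (Suc i))"
      using hub_antipodal_pair[OF c hub[of i] hub[of "Suc i"] rim[of i]] by simp
  qed
qed (use \<open>a \<le> b\<close> in simp_all)

lemma colored_subgraph_hub:
  assumes "contains_colored_subgraph V E Q F" "0 \<in> fst F"
  shows "\<exists>\<phi> c. c \<in> \<phi> 0 \<and> (\<forall>u v col. (u, v, col) \<in> snd F \<longrightarrow> att_edge V E Q (\<phi> u) (\<phi> v) col)"
proof -
  obtain \<phi> where \<phi>: "\<phi> ` fst F \<subseteq> att_vertices V E Q"
    and edges: "\<forall>(u, v, col) \<in> snd F. att_edge V E Q (\<phi> u) (\<phi> v) col"
    using assms(1) unfolding contains_colored_subgraph_def by blast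
  have "\<phi> 0 \<in> att_vertices V E Q" using \<phi> assms(2) by blast
  then obtain c where "c \<in> \<phi> 0" using att_vertex_nonempty by blast
  moreover have "\<forall>u v col. (u, v, col) \<in> snd F \<longrightarrow> att_edge V E Q (\<phi> u) (\<phi> v) col"
    using edges by fast
  ultimately show ?thesis by blast
qed

text \<open>In each pattern the rim vertices dominated by the hub form an antipodal path of odd length
  whose two ends are forced (by the rim closing up, or by the antipodal spokes) to carry the
  hub's branch in the same way; but crossing each antipodal rim edge switches it.\<close>

lemma no_W0_subgraph:
  assumes k: "k \<ge> 1"
  shows "\<not> contains_colored_subgraph V E Q (W0 k)"
proof
  assume "contains_colored_subgraph V E Q (W0 k)"
  moreover have "0 \<in> fst (W0 k)" by (simp add: W0_def)
  ultimately obtain \<phi> c where c: "c \<in> \<phi> 0"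
    and edge: "\<And>u v col. (u, v, col) \<in> snd (W0 k) \<Longrightarrow> att_edge V E Q (\<phi> u) (\<phi> v) col"
    using colored_subgraph_hub by blast
  let ?s = "\<lambda>i. branch_of c \<in> class_branches (\<phi> i)"
  have rim_edge: "att_edge V E Q (\<phi> i) (\<phi> (i mod (2*k+1) + 1)) Antipodal" if "1 \<le> i" "i \<le> 2*k+1" for i
    using that by (intro edge) (auto simp: W0_def)
  have hub: "att_edge V E Q (\<phi> 0) (\<phi> i) Dominance" if "1 \<le> i" "i \<le> 2*k+1" for i
    using that by (intro edge) (auto simp: W0_def)
  have rim: "att_edge V E Q (\<phi> i) (\<phi> (Suc i)) Antipodal" if "1 \<le> i" "i < 2*k+1" for i
    using that rim_edge[of i] by simp
  have "att_edge V E Q (\<phi> (2*k+1)) (\<phi> 1) Antipodal"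
    using rim_edge[of "2*k+1"] by simp
  then have "?s (2*k+1) \<longleftrightarrow> \<not> ?s 1"
    using hub_antipodal_pair[OF c hub[of "2*k+1"] hub[of 1]] by simp
  moreover have "?s (2*k+1) \<longleftrightarrow> (?s 1 \<longleftrightarrow> even (2*k+1 - 1))"
    by (rule rim_alternates[OF c]) (auto intro: hub rim)
  ultimately show False by simp
qed

lemma no_W1_subgraph:
  assumes k: "k \<ge> 1"
  shows "\<not> contains_colored_subgraph V E Q (W1 k)"
proof
  assume "contains_colored_subgraph V E Q (W1 k)"
  moreover have "0 \<in> fst (W1 k)" by (simp add: W1_def)
  ultimately obtain \<phi> c where c: "c \<in> \<phi> 0"
    and edge: "\<And>u v col. (u, v, col) \<in> snd (W1 k) \<Longrightarrow> att_edge V E Q (\<phi> u) (\<phi> v) col"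
    using colored_subgraph_hub by blast
  let ?s = "\<lambda>i. branch_of c \<in> class_branches (\<phi> i)"
  have rim_edge: "att_edge V E Q (\<phi> i) (\<phi> (i mod (2*k+1) + 1)) Antipodal" if "1 \<le> i" "i \<le> 2*k+1" for i
    using that by (intro edge) (auto simp: W1_def)
  have hub: "att_edge V E Q (\<phi> 0) (\<phi> i) Dominance" if "2 \<le> i" "i \<le> 2*k+1" for i
    using that by (intro edge) (auto simp: W1_def)
  have rim: "att_edge V E Q (\<phi> i) (\<phi> (Suc i)) Antipodal" if "1 \<le> i" "i < 2*k+1" for i
    using that rim_edge[of i] by simp
  have spoke: "att_edge V E Q (\<phi> 0) (\<phi> 1) Antipodal"
    by (intro edge) (simp add: W1_def)
  have closing: "att_edge V E Q (\<phi> 1) (\<phi> (2*k+1)) Antipodal"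
    using att_edge_sym[OF rim_edge[of "2*k+1"]] by simp
  have "att_edge V E Q (\<phi> 1) (\<phi> 2) Antipodal" using rim[of 1] k by (simp add: numeral_2_eq_2)
  then have "?s 2" by (rule antipodal_path_dominated_end[OF c spoke]) (use hub k in simp)
  moreover have "?s (2*k+1)" by (rule antipodal_path_dominated_end[OF c spoke closing]) (use hub k in simp)
  moreover have "?s (2*k+1) \<longleftrightarrow> (?s 2 \<longleftrightarrow> even (2*k+1 - 2))"
    by (rule rim_alternates[OF c]) (use k in \<open>auto intro: hub rim\<close>)
  moreover have "odd (2*k+1 - 2)" using k by presburger
  ultimately show False by simp
qed

lemma no_Ffan_subgraph:
  assumes n: "n \<ge> 2"
  shows "\<not> contains_colored_subgraph V E Q (Ffan n)"
proof
  assume "contains_colored_subgraph V E Q (Ffan n)"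
  moreover have "0 \<in> fst (Ffan n)" by (simp add: Ffan_def)
  ultimately obtain \<phi> c where c: "c \<in> \<phi> 0"
    and edge: "\<And>u v col. (u, v, col) \<in> snd (Ffan n) \<Longrightarrow> att_edge V E Q (\<phi> u) (\<phi> v) col"
    using colored_subgraph_hub by blast
  let ?s = "\<lambda>i. branch_of c \<in> class_branches (\<phi> i)"
  have hub: "att_edge V E Q (\<phi> 0) (\<phi> i) Dominance" if "2 \<le> i" "i \<le> 2*n-1" for i
    using that by (intro edge) (auto simp: Ffan_def)
  have rim: "att_edge V E Q (\<phi> i) (\<phi> (Suc i)) Antipodal" if "1 \<le> i" "i \<le> 2*n-1" for i
    using that edge[of i "i+1" Antipodal] by (auto simp: Ffan_def)
  have spokes: "att_edge V E Q (\<phi> 0) (\<phi> 1) Antipodal" "att_edge V E Q (\<phi> 0) (\<phi> (2*n)) Antipodal"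
    by (intro edge; simp add: Ffan_def)+
  have "att_edge V E Q (\<phi> (2*n-1)) (\<phi> (2*n)) Antipodal"
    using rim[of "2*n-1"] n by (simp add: Suc_diff_Suc)
  then have "?s (2*n-1)"
    by (rule antipodal_path_dominated_end[OF c spokes(2) att_edge_sym]) (use hub n in simp)
  moreover have "att_edge V E Q (\<phi> 1) (\<phi> 2) Antipodal" using rim[of 1] n by (simp add: numeral_2_eq_2)
  then have "?s 2" by (rule antipodal_path_dominated_end[OF c spokes(1)]) (use hub n in simp)
  moreover have "?s (2*n-1) \<longleftrightarrow> (?s 2 \<longleftrightarrow> even (2*n-1 - 2))"
    by (rule rim_alternates[OF c]) (use n in \<open>auto intro: hub rim\<close>)
  moreover have "odd (2*n-1 - 2)" using n by presburger
  ultimately show False by simp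
qed

lemma no_F0_subgraph: "F \<in> F0 \<Longrightarrow> \<not> contains_colored_subgraph V E Q F"
  unfolding F0_def using no_W0_subgraph no_W1_subgraph no_Ffan_subgraph by blast

end

section \<open>The tree model around a clique separator\<close>

lemma complete_set_insert:
  "complete_set V E K \<Longrightarrow> c \<in> V \<Longrightarrow> \<forall>k\<in>K. k \<noteq> c \<longrightarrow> E c k \<and> E k c \<Longrightarrow> complete_set V E (insert c K)"
  unfolding complete_set_def by auto

lemma complete_set_extends_to_clique:
  assumes fin: "finite V" and A: "complete_set V E A"
  obtains K where "clique V E K" "A \<subseteq> K"
proof -
  have "\<forall>K. complete_set V E K \<and> A \<subseteq> K \<longrightarrow> card K < card V + 1"
    using fin by (auto simp: complete_set_def intro: card_mono le_imp_less_Suc)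
  then obtain K where K: "complete_set V E K" "A \<subseteq> K"
    "\<forall>K'. complete_set V E K' \<and> A \<subseteq> K' \<longrightarrow> card K' \<le> card K"
    using ex_has_greatest_nat[of "\<lambda>K. complete_set V E K \<and> A \<subseteq> K" A card "card V + 1"] A by blast
  have "clique V E K"
    unfolding clique_def
  proof (intro conjI allI impI)
    fix K' assume K': "complete_set V E K' \<and> K \<subseteq> K'"
    then have "card K' \<le> card K" using K by blast
    moreover have "finite K'" using K' fin by (meson complete_set_def finite_subset)
    ultimately show "K' = K" using K' card_seteq by blast
  qed (rule K(1))
  then show ?thesis using that K(2) by blast
qed

lemma comps_form: "C \<in> comps S E \<Longrightarrow> \<exists>x\<in>S. C = {y \<in> S. reach S E x y}"
  unfolding comps_def by blast

lemma clique_separator_nonempty: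
  assumes conn: "connected_graph V E" and Q: "clique_separator V E Q"
  shows "Q \<noteq> {}"
proof
  assume "Q = {}"
  have "comps V E \<subseteq> {V}"
    using conn unfolding comps_def connected_graph_def by blast
  then have "card (comps V E) \<le> 1" using card_mono[of "{V}"] by simp
  then show False using Q \<open>Q = {}\<close> unfolding clique_separator_def by simp
qed

locale path_model_at = tree_graph TV TE for TV :: "'b set" and TE +
  fixes V :: "'a set" and E :: "'a \<Rightarrow> 'a \<Rightarrow> bool" and f :: "'a \<Rightarrow> 'b set"
    and Q :: "'a set" and t0 :: 'b
  assumes graph: "graph V E" and connected: "connected_graph V E"
    and path_set: "\<forall>v\<in>V. is_path_set TV TE (f v)"
    and adj_iff_meet: "\<forall>u\<in>V. \<forall>v\<in>V. u \<noteq> v \<longrightarrow> (E u v \<longleftrightarrow> f u \<inter> f v \<noteq> {})"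
    and separator: "clique_separator V E Q"
    and t0_in_Q_paths: "\<forall>q\<in>Q. t0 \<in> f q"
    and t0_node: "t0 \<in> TV"
begin

lemma adj_sym: "E u v \<Longrightarrow> E v u" using graph unfolding graph_def by blast
lemma adj_irrefl: "\<not> E v v" using graph unfolding graph_def by blast
lemma adj_vertices: "E u v \<Longrightarrow> u \<in> V \<and> v \<in> V" using graph unfolding graph_def by blast
lemma finite_V: "finite V" using graph unfolding graph_def by blast

lemma adj_imp_meet: "E u v \<Longrightarrow> f u \<inter> f v \<noteq> {}"
  using adj_iff_meet adj_vertices adj_irrefl by metis

lemma meet_imp_adj: "u \<in> V \<Longrightarrow> v \<in> V \<Longrightarrow> u \<noteq> v \<Longrightarrow> f u \<inter> f v \<noteq> {} \<Longrightarrow> E u v"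
  using adj_iff_meet by blast

lemma Q_subset: "Q \<subseteq> V"
  using separator unfolding clique_separator_def clique_def complete_set_def by blast

lemma Q_adj: "q \<in> Q \<Longrightarrow> q' \<in> Q \<Longrightarrow> q \<noteq> q' \<Longrightarrow> E q q'"
  using separator unfolding clique_separator_def clique_def complete_set_def by blast

lemma vertex_tree_path: "v \<in> V \<Longrightarrow> \<exists>xs. tree_path xs \<and> f v = set xs"
  using path_set unfolding is_path_set_def tree_path_def by blast

lemma vertex_path_subset: "v \<in> V \<Longrightarrow> f v \<subseteq> TV"
  using vertex_tree_path by (auto simp: tree_path_def)

lemma vertex_path_nonempty: "v \<in> V \<Longrightarrow> f v \<noteq> {}"
  using vertex_tree_path by (fastforce simp: tree_path_def)

lemma vertex_path_reach:
  assumes v: "v \<in> V" and x: "x \<in> f v" and y: "y \<in> f v"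
  shows "reach (f v) TE x y"
proof -
  obtain xs where xs: "tree_path xs" "f v = set xs" using vertex_tree_path[OF v] by blast
  then have walk: "successively TE xs" by (simp add: tree_path_def)
  have hd_x: "reach (set xs) TE (hd xs) x" using reach_along_path[OF walk subset_refl, of x] x xs(2) by simp
  have x_hd: "reach (set xs) TE x (hd xs)" using reach_sym[OF _ hd_x] edge_sym by blast
  have hd_y: "reach (set xs) TE (hd xs) y" using reach_along_path[OF walk subset_refl, of y] y xs(2) by simp
  show ?thesis using reach_trans[OF x_hd hd_y] xs(2) by simp
qed

lemma t0_notin_outside:
  assumes c: "c \<in> V" "c \<notin> Q"
  shows "t0 \<notin> f c"
proof
  assume t: "t0 \<in> f c"
  have "E c q" if "q \<in> Q" for q
  proof (rule meet_imp_adj)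
    show "f c \<inter> f q \<noteq> {}" using t t0_in_Q_paths that by blast
  qed (use Q_subset c that in auto)
  then have "\<forall>q\<in>Q. q \<noteq> c \<longrightarrow> E c q \<and> E q c" using adj_sym by blast
  moreover have "complete_set V E Q" using separator unfolding clique_separator_def clique_def by blast
  ultimately have "complete_set V E (insert c Q)" using complete_set_insert c(1) by metis
  then have "insert c Q = Q" using separator unfolding clique_separator_def clique_def by blast
  then show False using c by blast
qed

lemma gate_on_vertex_paths:
  assumes S: "S \<subseteq> TV - {t0}" "S \<noteq> {}" "\<forall>x\<in>S. \<forall>y\<in>S. reach S TE x y"
  shows "\<exists>u\<in>S. \<forall>v\<in>V. t0 \<in> f v \<longrightarrow> f v \<inter> S \<noteq> {} \<longrightarrow> u \<in> f v"
proof -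
  obtain u where u: "u \<in> S"
    "\<forall>ps. tree_path ps \<longrightarrow> t0 \<in> set ps \<longrightarrow> set ps \<inter> S \<noteq> {} \<longrightarrow> u \<in> set ps"
    using connected_set_gate[of S t0] S t0_node by blast
  have "u \<in> f v" if v: "v \<in> V" "t0 \<in> f v" "f v \<inter> S \<noteq> {}" for v
  proof -
    obtain xs where "tree_path xs" "f v = set xs" using vertex_tree_path[OF v(1)] by blast
    then show ?thesis using u(2) v(2,3) by simp
  qed
  then show ?thesis using u(1) by blast
qed

lemma Q_path_convex:
  assumes q: "q \<in> Q" and u: "u \<in> f q" and R: "tree_path R" "hd R = t0" "last R = u"
  shows "set R \<subseteq> f q"
proof -
  have "tree_convex (f q)" using tree_convex_path_set path_set Q_subset q by blast
  then show ?thesis using R u t0_in_Q_paths q unfolding tree_convex_def by blast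
qed

lemma Gamma_component:
  assumes "g \<in> Gamma V E Q"
  obtains C where "C \<in> comps (V - Q) E" "g = C \<union> Q" "g - Q = C" "C \<subseteq> V - Q"
proof -
  obtain C where C: "C \<in> comps (V - Q) E" "g = C \<union> Q" using assms unfolding Gamma_def by blast
  moreover have "C \<subseteq> V - Q" using C(1) unfolding comps_def by blast
  ultimately show ?thesis using that by blast
qed

lemma Gamma_subset: "g \<in> Gamma V E Q \<Longrightarrow> g \<subseteq> V"
  unfolding Gamma_def comps_def using Q_subset by blast

lemma Q_subset_Gamma: "g \<in> Gamma V E Q \<Longrightarrow> Q \<subseteq> g"
  unfolding Gamma_def by blast

lemma relevant_subset: "relevant E Q g K \<Longrightarrow> K \<subseteq> g"
  unfolding relevant_def clique_def complete_set_def by blast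

lemma relevant_adj: "relevant E Q g K \<Longrightarrow> u \<in> K \<Longrightarrow> v \<in> K \<Longrightarrow> u \<noteq> v \<Longrightarrow> E u v"
  unfolding relevant_def clique_def complete_set_def by blast

lemma relevant_outside_Q:
  assumes g: "g \<in> Gamma V E Q" and K: "relevant E Q g K"
  shows "\<exists>c\<in>K. c \<notin> Q"
proof (rule ccontr)
  assume "\<not> (\<exists>c\<in>K. c \<notin> Q)"
  then have "K \<subseteq> Q" by blast
  moreover have "complete_set g E Q" using Q_subset_Gamma[OF g] Q_adj unfolding complete_set_def by blast
  ultimately have "Q = K" using K unfolding relevant_def clique_def by blast
  then show False using K unfolding relevant_def by blast
qed

lemma relevant_nonneighbor:
  assumes g: "g \<in> Gamma V E Q" and K: "relevant E Q g K" and a: "a \<in> Q" "a \<notin> K"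
  shows "\<exists>d\<in>K. d \<notin> Q \<and> \<not> E a d"
proof (rule ccontr)
  assume "\<not> (\<exists>d\<in>K. d \<notin> Q \<and> \<not> E a d)"
  then have "E a d" if "d \<in> K" "d \<notin> Q" for d using that by blast
  then have adj_a: "\<forall>k\<in>K. k \<noteq> a \<longrightarrow> E a k \<and> E k a" using Q_adj a adj_sym by blast
  have "complete_set g E K" using K unfolding relevant_def clique_def by blast
  moreover have "a \<in> g" using Q_subset_Gamma[OF g] a by blast
  ultimately have "complete_set g E (insert a K)" using adj_a by (rule complete_set_insert)
  then have "insert a K = K" using K unfolding relevant_def clique_def by blast
  then show False using a by blast
qed

definition tree_part :: "'a set \<Rightarrow> 'b set" where
  "tree_part C = \<Union>(f ` C)"

lemma tree_part_avoids_t0: "C \<subseteq> V - Q \<Longrightarrow> tree_part C \<subseteq> TV - {t0}"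
  unfolding tree_part_def using vertex_path_subset t0_notin_outside by blast

lemma reach_tree_part:
  assumes "reach S E x y" "S \<subseteq> V" "x \<in> S" "a \<in> f x"
  shows "\<forall>b\<in>f y. reach (tree_part {z \<in> S. reach S E x z}) TE a b"
  using assms(1)
proof (induction rule: reach_induct)
  case refl
  have "x \<in> {z \<in> S. reach S E x z}" using assms(3) by (simp add: reach_refl)
  then have part: "f x \<subseteq> tree_part {z \<in> S. reach S E x z}" unfolding tree_part_def by blast
  have "x \<in> V" using assms(2,3) by blast
  then show ?case using assms(4) vertex_path_reach reach_mono[OF part] by blast
next
  case (step y z)
  have "reach S E x z" using step(1) reach_step[of E y z S, OF step(2-4)] by (rule reach_trans)
  then have part: "f z \<subseteq> tree_part {z \<in> S. reach S E x z}"
    unfolding tree_part_def using step(4) by blast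
  obtain w where w: "w \<in> f y" "w \<in> f z" using adj_imp_meet[OF step(2)] by blast
  have to_w: "reach (tree_part {z \<in> S. reach S E x z}) TE a w" using step(5) w(1) by blast
  have "z \<in> V" using step(4) assms(2) by blast
  then have "reach (tree_part {z \<in> S. reach S E x z}) TE w b" if "b \<in> f z" for b
    using w(2) that vertex_path_reach reach_mono[OF part] by blast
  then show ?case using reach_trans[OF to_w] by blast
qed

lemma tree_part_connected:
  assumes C: "C \<in> comps (V - Q) E"
  shows "\<forall>x\<in>tree_part C. \<forall>y\<in>tree_part C. reach (tree_part C) TE x y"
proof (intro ballI)
  obtain x0 where x0: "x0 \<in> V - Q" "C = {y \<in> V - Q. reach (V - Q) E x0 y}"
    using comps_form[OF C] by blast
  obtain a where a: "a \<in> f x0" using vertex_path_nonempty x0 by blast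
  have from_a: "reach (tree_part C) TE a b" if b: "b \<in> tree_part C" for b
  proof -
    obtain c where "c \<in> C" "b \<in> f c" using b unfolding tree_part_def by blast
    then show ?thesis using reach_tree_part[of "V - Q" x0 c a] x0 a by blast
  qed
  fix x y assume x: "x \<in> tree_part C" and y: "y \<in> tree_part C"
  have "reach (tree_part C) TE x a" using reach_sym[OF _ from_a[OF x]] edge_sym by blast
  then show "reach (tree_part C) TE x y" using from_a[OF y] by (rule reach_trans)
qed

definition branch_of :: "'a set \<Rightarrow> 'b set" where
  "branch_of g = branch t0 (SOME x. x \<in> tree_part (g - Q))"

definition branches_at :: "'a \<Rightarrow> 'b set set" where
  "branches_at q = branch t0 ` (f q - {t0})"

lemma branch_of_eq:
  assumes g: "g \<in> Gamma V E Q" and x: "x \<in> tree_part (g - Q)"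
  shows "branch_of g = branch t0 x"
proof -
  obtain C where C: "C \<in> comps (V - Q) E" "g - Q = C" "C \<subseteq> V - Q" using Gamma_component[OF g] by metis
  have some: "(SOME x. x \<in> tree_part C) \<in> tree_part C" using x C by (metis someI)
  then have "reach (tree_part C) TE x (SOME x. x \<in> tree_part C)"
    using tree_part_connected[OF C(1)] x C(2) by blast
  then have "reach (TV - {t0}) TE x (SOME x. x \<in> tree_part C)"
    using reach_mono[OF tree_part_avoids_t0[OF C(3)]] by blast
  then show ?thesis unfolding branch_of_def using branch_eq C(2) by metis
qed

lemma branch_of_in_branches_at:
  assumes g: "g \<in> Gamma V E Q" and K: "relevant E Q g K" and q: "q \<in> K" "q \<in> Q"
  shows "branch_of g \<in> branches_at q"
proof -
  obtain C where C: "C \<in> comps (V - Q) E" "g - Q = C" "C \<subseteq> V - Q" using Gamma_component[OF g] by metis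
  obtain c where c: "c \<in> K" "c \<notin> Q" using relevant_outside_Q[OF g K] by blast
  have cC: "c \<in> C" using c relevant_subset[OF K] C by blast
  have "c \<noteq> q" using c q by blast
  then have "E q c" using relevant_adj[OF K] c q by blast
  then obtain x where x: "x \<in> f q" "x \<in> f c" using adj_imp_meet by blast
  have "x \<noteq> t0" using t0_notin_outside[of c] cC C x by blast
  moreover have "branch_of g = branch t0 x" using branch_of_eq[OF g] x cC C unfolding tree_part_def by blast
  ultimately show ?thesis unfolding branches_at_def using x by blast
qed

lemma branches_at_card:
  assumes q: "q \<in> Q"
  shows "finite (branches_at q) \<and> card (branches_at q) \<le> 2"
proof -
  obtain xs where xs: "tree_path xs" "f q = set xs" using vertex_tree_path q Q_subset by blast
  then have "t0 \<in> set xs" using t0_in_Q_paths q by blast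
  then show ?thesis using card_branches_on_path[OF xs(1)] xs(2) unfolding branches_at_def by simp
qed

definition Q_neighbors :: "'a set \<Rightarrow> 'a set" where
  "Q_neighbors C = {q \<in> Q. \<exists>c\<in>C. E q c}"

lemma Q_neighbors_nonempty:
  assumes C: "C \<in> comps (V - Q) E"
  shows "Q_neighbors C \<noteq> {}"
proof
  assume none: "Q_neighbors C = {}"
  obtain x0 where x0: "x0 \<in> V - Q" "C = {y \<in> V - Q. reach (V - Q) E x0 y}" using comps_form[OF C] by blast
  obtain q0 where q0: "q0 \<in> Q" using clique_separator_nonempty[OF connected separator] by blast
  have "reach V E x0 q0" using connected x0 q0 Q_subset unfolding connected_graph_def by blast
  then have "q0 \<in> C"
  proof (induction rule: reach_induct)
    case refl
    show ?case using x0 by (simp add: reach_refl)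
  next
    case (step y z)
    have "z \<notin> Q" using none step(2,5) adj_sym unfolding Q_neighbors_def by blast
    then have "reach (V - Q) E y z" using step(2-5) x0 by (intro reach_step) auto
    moreover have "reach (V - Q) E x0 y" using step(5) x0(2) by blast
    ultimately have "reach (V - Q) E x0 z" using reach_trans by metis
    then show ?case using x0(2) step(4) \<open>z \<notin> Q\<close> by blast
  qed
  then show False using x0 q0 by blast
qed

lemma relevant_trace_Q_neighbors:
  assumes g: "g \<in> Gamma V E Q" and K: "relevant E Q g K"
  shows "K \<inter> Q \<subseteq> Q_neighbors (g - Q)"
proof
  fix q assume q: "q \<in> K \<inter> Q"
  obtain c where c: "c \<in> K" "c \<notin> Q" using relevant_outside_Q[OF g K] by blast
  then have "E q c" using relevant_adj[OF K] q by blast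
  then show "q \<in> Q_neighbors (g - Q)" using c q relevant_subset[OF K] unfolding Q_neighbors_def by blast
qed

text \<open>All \<open>Q\<close>-neighbours of a component pass through the gate of its tree part, and hence are
  adjacent to a common vertex of the component.\<close>

lemma Q_neighbors_common_neighbor:
  assumes C: "C \<in> comps (V - Q) E"
  shows "\<exists>c\<in>C. \<forall>q\<in>Q_neighbors C. E c q \<and> E q c"
proof -
  obtain x0 where x0: "x0 \<in> V - Q" "x0 \<in> C" using comps_form[OF C] by (auto simp: reach_refl)
  have CV: "C \<subseteq> V - Q" using C unfolding comps_def by blast
  have "tree_part C \<noteq> {}" using vertex_path_nonempty x0 unfolding tree_part_def by blast
  then obtain u where u: "u \<in> tree_part C"
    and gate: "\<forall>v\<in>V. t0 \<in> f v \<longrightarrow> f v \<inter> tree_part C \<noteq> {} \<longrightarrow> u \<in> f v"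
    using gate_on_vertex_paths[OF tree_part_avoids_t0[OF CV] _ tree_part_connected[OF C]] by blast
  obtain c where c: "c \<in> C" "u \<in> f c" using u unfolding tree_part_def by blast
  have "E c q \<and> E q c" if q: "q \<in> Q_neighbors C" for q
  proof -
    obtain c' where c': "c' \<in> C" "E q c'" "q \<in> Q" using q unfolding Q_neighbors_def by blast
    have "f q \<inter> tree_part C \<noteq> {}" using adj_imp_meet[OF c'(2)] c'(1) unfolding tree_part_def by blast
    then have "u \<in> f q" using gate Q_subset c'(3) t0_in_Q_paths by blast
    then have "E q c" using meet_imp_adj[of q c] c CV c'(3) Q_subset by blast
    then show ?thesis using adj_sym by blast
  qed
  then show ?thesis using c(1) by blast
qed

lemma relevant_trace_maximum:
  assumes g: "g \<in> Gamma V E Q"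
  shows "\<exists>K. relevant E Q g K \<and> (\<forall>K'. relevant E Q g K' \<longrightarrow> K' \<inter> Q \<subseteq> K \<inter> Q)"
proof -
  obtain C where C: "C \<in> comps (V - Q) E" "g = C \<union> Q" "g - Q = C" "C \<subseteq> V - Q"
    using Gamma_component[OF g] by metis
  obtain c where c: "c \<in> C" "\<forall>q\<in>Q_neighbors C. E c q \<and> E q c"
    using Q_neighbors_common_neighbor[OF C(1)] by blast
  have "complete_set g E (Q_neighbors C)"
    using Q_adj C(2) unfolding complete_set_def Q_neighbors_def by blast
  moreover have "c \<in> g" using c(1) C(2) by blast
  ultimately have "complete_set g E (insert c (Q_neighbors C))"
    by (rule complete_set_insert) (use c(2) in blast)
  moreover have "finite g" using finite_V C(2,4) Q_subset by (simp add: finite_subset)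
  ultimately obtain K where K: "clique g E K" "insert c (Q_neighbors C) \<subseteq> K"
    using complete_set_extends_to_clique by blast
  have "Q_neighbors C \<subseteq> Q" unfolding Q_neighbors_def by blast
  then have "relevant E Q g K"
    unfolding relevant_def using K Q_neighbors_nonempty[OF C(1)] c(1) C(4) by blast
  moreover have "K' \<inter> Q \<subseteq> K \<inter> Q" if "relevant E Q g K'" for K'
    using relevant_trace_Q_neighbors[OF g that] K(2) C(3) by blast
  ultimately show ?thesis by blast
qed

lemma gate_of_outside_vertex:
  assumes d: "d \<in> V" "d \<notin> Q"
  shows "\<exists>u\<in>f d. \<forall>q\<in>Q. E q d \<longrightarrow> u \<in> f q"
proof -
  have "f d \<subseteq> TV - {t0}" "f d \<noteq> {}" "\<forall>x\<in>f d. \<forall>y\<in>f d. reach (f d) TE x y"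
    using vertex_path_subset vertex_path_nonempty t0_notin_outside vertex_path_reach d by auto
  then obtain u where u: "u \<in> f d"
    and gate: "\<forall>v\<in>V. t0 \<in> f v \<longrightarrow> f v \<inter> f d \<noteq> {} \<longrightarrow> u \<in> f v"
    using gate_on_vertex_paths by blast
  have "u \<in> f q" if q: "q \<in> Q" "E q d" for q
    using gate adj_imp_meet[OF q(2)] Q_subset t0_in_Q_paths q(1) by blast
  then show ?thesis using u by blast
qed

lemma adj_if_on_path_from_t0:
  assumes a: "a \<in> Q" "u \<in> f a" and R: "tree_path R" "hd R = t0" "last R = u"
    and u': "u' \<in> set R" "u' \<in> f d" and d: "d \<in> V" "d \<notin> Q"
  shows "E a d"
proof -
  have "u' \<in> f a" using Q_path_convex[OF a R] u'(1) by blast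
  then show ?thesis using meet_imp_adj[of a d] u'(2) d a(1) Q_subset by blast
qed

text \<open>If the relevant cliques \<open>K\<close>, \<open>K'\<close> of \<open>\<gamma>\<close>, \<open>\<gamma>'\<close> in the same branch had incomparable traces, pick
  \<open>a \<in> K - K'\<close> and \<open>b \<in> K' - K\<close> in \<open>Q\<close> and non-neighbours \<open>d' \<in> K'\<close> of \<open>a\<close> and \<open>d \<in> K\<close> of \<open>b\<close>.
  The gates \<open>u\<close>, \<open>u'\<close> of \<open>f d\<close>, \<open>f d'\<close> lie in one branch and on a common path \<open>f q\<close>, so one of them
  lies between \<open>t\<^sub>0\<close> and the other; then \<open>f a\<close> meets \<open>f d'\<close> or \<open>f b\<close> meets \<open>f d\<close>.\<close>

lemma same_branch_of_traces_comparable: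
  assumes g: "g \<in> Gamma V E Q" and g': "g' \<in> Gamma V E Q" and same: "branch_of g = branch_of g'"
    and K: "relevant E Q g K" and K': "relevant E Q g' K'" and meet: "K \<inter> K' \<inter> Q \<noteq> {}"
  shows "K \<inter> Q \<subseteq> K' \<inter> Q \<or> K' \<inter> Q \<subseteq> K \<inter> Q"
proof (rule ccontr)
  assume "\<not> (K \<inter> Q \<subseteq> K' \<inter> Q \<or> K' \<inter> Q \<subseteq> K \<inter> Q)"
  then obtain a b where a: "a \<in> K" "a \<in> Q" "a \<notin> K'" and b: "b \<in> K'" "b \<in> Q" "b \<notin> K" by blast
  obtain q where q: "q \<in> K" "q \<in> K'" "q \<in> Q" using meet by blast
  obtain d' where d': "d' \<in> K'" "d' \<notin> Q" "\<not> E a d'" using relevant_nonneighbor[OF g' K' a(2,3)] by blast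
  obtain d where d: "d \<in> K" "d \<notin> Q" "\<not> E b d" using relevant_nonneighbor[OF g K b(2,3)] by blast
  have dg: "d \<in> g - Q" "d' \<in> g' - Q" using d d' relevant_subset[OF K] relevant_subset[OF K'] by blast+
  then have dV: "d \<in> V" "d' \<in> V" using Gamma_subset[OF g] Gamma_subset[OF g'] by blast+
  obtain u where u: "u \<in> f d" "\<forall>p\<in>Q. E p d \<longrightarrow> u \<in> f p"
    using gate_of_outside_vertex dV(1) d(2) by blast
  obtain u' where u': "u' \<in> f d'" "\<forall>p\<in>Q. E p d' \<longrightarrow> u' \<in> f p"
    using gate_of_outside_vertex dV(2) d'(2) by blast
  have "u \<in> f a" "u \<in> f q" using u(2) relevant_adj[OF K] a q d by blast+
  have "u' \<in> f b" "u' \<in> f q" using u'(2) relevant_adj[OF K'] b q d' by blast+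
  have "u \<in> tree_part (g - Q)" "u' \<in> tree_part (g' - Q)"
    using u(1) u'(1) dg unfolding tree_part_def by blast+
  then have "branch_of g = branch t0 u" "branch_of g' = branch t0 u'"
    using branch_of_eq[OF g] branch_of_eq[OF g'] by blast+
  then have "reach (TV - {t0}) TE u u'" using same branch_eq_imp_reach by metis
  moreover obtain ps where ps: "tree_path ps" "f q = set ps" using vertex_tree_path q(3) Q_subset by blast
  moreover have "u \<noteq> t0" "u' \<noteq> t0" using u(1) u'(1) t0_notin_outside dV d(2) d'(2) by blast+
  ultimately obtain R where R: "tree_path R" "hd R = t0"
    "last R = u \<and> u' \<in> set R \<or> last R = u' \<and> u \<in> set R"
    using same_branch_nested[of ps t0 u u'] t0_in_Q_paths q(3) \<open>u \<in> f q\<close> \<open>u' \<in> f q\<close> by blast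
  then show False
  proof (elim disjE conjE)
    assume "last R = u" "u' \<in> set R"
    then have "E a d'" using adj_if_on_path_from_t0[OF a(2) \<open>u \<in> f a\<close> R(1,2)] u'(1) dV(2) d'(2) by blast
    then show False using d'(3) by blast
  next
    assume "last R = u'" "u \<in> set R"
    then have "E b d" using adj_if_on_path_from_t0[OF b(2) \<open>u' \<in> f b\<close> R(1,2)] u(1) dV(1) d(2) by blast
    then show False using d(3) by blast
  qed
qed

end

sublocale path_model_at \<subseteq> branch_structure V E Q branch_of branches_at
  by unfold_locales
    (assumption | rule branch_of_in_branches_at same_branch_of_traces_comparable
      relevant_trace_maximum branches_at_card)+

lemma complete_set_path_sets_meet:
  assumes K: "complete_set V E K" and paths: "\<forall>v\<in>V. is_path_set TV TE (f v)"
    and adj: "\<forall>u\<in>V. \<forall>v\<in>V. u \<noteq> v \<longrightarrow> (E u v \<longleftrightarrow> f u \<inter> f v \<noteq> {})"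
    and q: "q \<in> K" "q' \<in> K"
  shows "f q \<inter> f q' \<noteq> {}"
proof (cases "q = q'")
  case True
  then show ?thesis using paths K q unfolding is_path_set_def complete_set_def by fastforce
next
  case False
  then have "E q q'" using K q unfolding complete_set_def by blast
  then show ?thesis using adj K q False unfolding complete_set_def by blast
qed

lemma path_model_at_exists:
  assumes "graph V E" "connected_graph V E" "clique_separator V E Q" "path_graph V E"
  shows "\<exists>(TV :: nat set) TE f t0. path_model_at TV TE V E f Q t0"
proof -
  obtain TV :: "nat set" and TE f where T: "tree TV TE" "\<forall>v\<in>V. is_path_set TV TE (f v)"
    "\<forall>u\<in>V. \<forall>v\<in>V. u \<noteq> v \<longrightarrow> (E u v \<longleftrightarrow> f u \<inter> f v \<noteq> {})"
    using assms(4) unfolding path_graph_def by blast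
  interpret tree_graph TV TE by (rule tree_graph.intro) (rule T(1))
  have QV: "Q \<subseteq> V" using assms(3) unfolding clique_separator_def clique_def complete_set_def by blast
  have "\<exists>t0\<in>TV. \<forall>q\<in>Q. t0 \<in> f q"
  proof (rule path_sets_common_node)
    show "finite Q" using QV assms(1) finite_subset unfolding graph_def by blast
    show "Q \<noteq> {}" using clique_separator_nonempty assms(2,3) by blast
    show "\<forall>q\<in>Q. is_path_set TV TE (f q)" using T(2) QV by blast
    show "\<forall>q\<in>Q. \<forall>q'\<in>Q. f q \<inter> f q' \<noteq> {}"
      using complete_set_path_sets_meet[OF _ T(2,3)] assms(3)
      unfolding clique_separator_def clique_def by blast
  qed
  then obtain t0 where "t0 \<in> TV" "\<forall>q\<in>Q. t0 \<in> f q" by blast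
  then have "path_model_at TV TE V E f Q t0"
    using assms(1-3) T by unfold_locales auto
  then show ?thesis by blast
qed

theorem lemma4p5:
  fixes V :: "'a set" and E :: "'a \<Rightarrow> 'a \<Rightarrow> bool"
  assumes "graph V E"
    and "connected_graph V E"
    and "chordal V E"
    and "\<exists>Q. clique_separator V E Q"
    and "path_graph V E"
  shows "\<forall>Q. clique_separator V E Q \<longrightarrow>
           \<not> has_full_antipodal_triangle V E Q \<and>
           (\<forall>F \<in> F0. \<not> contains_colored_subgraph V E Q F)"
proof (intro allI impI)
  fix Q assume "clique_separator V E Q"
  then obtain TV :: "nat set" and TE f t0 where "path_model_at TV TE V E f Q t0"
    using path_model_at_exists assms(1,2,5) by blast
  then interpret path_model_at TV TE V E f Q t0 .
  show "\<not> has_full_antipodal_triangle V E Q \<and> (\<forall>F \<in> F0. \<not> contains_colored_subgraph V E Q F)"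
    using no_full_antipodal_triangle no_F0_subgraph by blast
qed

end
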